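(* Let $d\ge 2$, $\alpha\in(0,1)$, and let $\mathbf w\in[0,1]^{d\times d}$. Let $G$ be the graph on $\{1,\dots,d\}$ whose edges are the pairs $(r,s)$, $r\ne s$, with $w_{rs}>0$, and let $\kappa(G)$ be its number of connected components. Along integers $n$ for which $n\mathbf w$ has integer entries: if $\mathbf w\in\mathcal F$, then $\displaystyle\lim_{n\to\infty}\frac{\log q(n\mathbf w)}{\log n}=-\frac{d-\kappa(G)}2$; if $\mathbf w\notin\mathcal F$, then $\displaystyle\lim_{n\to\infty}\frac{\log q(n\mathbf w)}{n}=-\vartheta(\mathbf w)$.
   Context: $\mathcal F=\{\mathbf x\in\mathbb R^{d\times d}:\sum_s x_{rs}=\sum_s x_{sr}\ \forall r\}$. For $\boldsymbol\mu\in\mathbb Z_+^{d\times d}$, $q(\boldsymbol\mu)=\sum_{\boldsymbol\nu}\prod_{r,s}\binom{\mu_{rs}}{\nu_{rs}}\alpha^{\nu_{rs}}(1-\alpha)^{\mu_{rs}-\nu_{rs}}$, summing over integer arrays $\boldsymbol\nu\in\mathcal F$ with $0\le\nu_{rs}\le\mu_{rs}$. $D(p\|q)=p\log\frac pq+(1-p)\log\frac{1-p}{1-q}$, and $\vartheta(\mathbf w)=\min\{\sum_{r\ne s:\,w_{rs}>0}w_{rs}D(x_{rs}\|\alpha):\mathbf x\in[0,1]^{d\times d},\ \mathbf w\odot\mathbf x\in\mathcal F\}$ with $\odot$ the entrywise product. Connected components of $G$ are those of the underlying undirected graph. *)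

theory Defs
  imports "HOL-Analysis.Analysis"
begin

text \<open>Arrays indexed by {0..<d} x {0..<d} (index r stands for r+1 of the paper);
  values outside this range are ignored by all definitions.\<close>

definition in_F :: "nat \<Rightarrow> (nat \<Rightarrow> nat \<Rightarrow> real) \<Rightarrow> bool" where
  "in_F d x \<longleftrightarrow> (\<forall>r<d. (\<Sum>s<d. x r s) = (\<Sum>s<d. x s r))"

definition q :: "nat \<Rightarrow> real \<Rightarrow> (nat \<Rightarrow> nat \<Rightarrow> nat) \<Rightarrow> real" where
  "q d \<alpha> \<mu> = (\<Sum>\<nu> \<in> {\<nu>. (\<forall>r<d. \<forall>s<d. \<nu> r s \<le> \<mu> r s)
                       \<and> (\<forall>r s. \<not> (r < d \<and> s < d) \<longrightarrow> \<nu> r s = 0)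
                       \<and> in_F d (\<lambda>r s. real (\<nu> r s))}.
      (\<Prod>r<d. \<Prod>s<d. real (\<mu> r s choose \<nu> r s) * \<alpha> ^ \<nu> r s * (1 - \<alpha>) ^ (\<mu> r s - \<nu> r s)))"

definition KL :: "real \<Rightarrow> real \<Rightarrow> real" where
  "KL p p' = p * ln (p / p') + (1 - p) * ln ((1 - p) / (1 - p'))"

definition vartheta :: "nat \<Rightarrow> real \<Rightarrow> (nat \<Rightarrow> nat \<Rightarrow> real) \<Rightarrow> real" where
  "vartheta d \<alpha> w = Inf {(\<Sum>(r,s) \<in> {(r,s). r < d \<and> s < d \<and> r \<noteq> s \<and> w r s > 0}.
                              w r s * KL (x r s) \<alpha>)
       | x. (\<forall>r<d. \<forall>s<d. 0 \<le> x r s \<and> x r s \<le> 1) \<and> in_F d (\<lambda>r s. w r s * x r s)}"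

definition graph_edges :: "nat \<Rightarrow> (nat \<Rightarrow> nat \<Rightarrow> real) \<Rightarrow> (nat \<times> nat) set" where
  "graph_edges d w = {(r,s). r < d \<and> s < d \<and> r \<noteq> s \<and> w r s > 0}"

definition connected_rel :: "nat \<Rightarrow> (nat \<Rightarrow> nat \<Rightarrow> real) \<Rightarrow> (nat \<times> nat) set" where
  "connected_rel d w = Id_on {..<d} \<union> (graph_edges d w \<union> (graph_edges d w)\<inverse>)\<^sup>+"

definition num_components :: "nat \<Rightarrow> (nat \<Rightarrow> nat \<Rightarrow> real) \<Rightarrow> nat" where
  "num_components d w = card ({..<d} // connected_rel d w)"

definition admissible :: "nat \<Rightarrow> (nat \<Rightarrow> nat \<Rightarrow> real) \<Rightarrow> nat set" where
  "admissible d w = {n. \<forall>r<d. \<forall>s<d. real n * w r s \<in> \<int>}"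

definition scale_int :: "nat \<Rightarrow> (nat \<Rightarrow> nat \<Rightarrow> real) \<Rightarrow> (nat \<Rightarrow> nat \<Rightarrow> nat)" where
  "scale_int n w = (\<lambda>r s. nat \<lfloor>real n * w r s\<rfloor>)"

end

theory Submission
  imports Defs "HOL-Probability.Hoeffding" "HOL-Real_Asymp.Real_Asymp"
begin

text \<open>
  \<open>q \<mu>\<close> is the probability that independent \<open>\<nu>\<^sub>r\<^sub>s \<sim> Bin(\<mu>\<^sub>r\<^sub>s, \<alpha>)\<close> form a balanced array.
  Fix a spanning forest of \<open>G\<close>; it has \<open>d - \<kappa>(G)\<close> edges, and a balanced array is determined by
  its entries off the forest, because the entries on the forest can be solved for leaf by leaf.

  Summing the product of binomial probabilities over the off-forest entries
  leaves one factor \<open>max\<^sub>j P(Bin(n w\<^sub>r\<^sub>s, \<alpha>) = j) = O(n^{-1/2})\<close> per forest edge. Independently,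
  each balanced \<open>\<nu>\<close> has frequencies \<open>\<nu>/\<mu>\<close> that are feasible for \<open>\<vartheta>\<close>, so by the Chernoff bound its
  probability is at most \<open>exp (-n \<vartheta>)\<close>, and there are at most \<open>(n+1)^{d\<^sup>2}\<close> of them.

  For frequencies \<open>x\<close> that are feasible for \<open>\<vartheta>\<close> (for \<open>w \<in> F\<close> take \<open>x = \<alpha>\<close>), let the
  off-forest entries range over \<open>\<surd>\<mu>\<close>-windows around the means \<open>n w x\<close> and solve for the forest
  entries; they stay within \<open>O(\<surd>n)\<close> of their means. Exponential tilting turns
  \<open>Bin(\<mu>, \<alpha>)\<close> into \<open>Bin(\<mu>, x)\<close> at the cost \<open>exp (-\<mu> KL(x\<parallel>\<alpha>) - O(\<surd>n))\<close>; each window carries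
  mass at least \<open>1/3\<close> of \<open>Bin(\<mu>, x)\<close>, and near its mean \<open>Bin(\<mu>, x)\<close> is at least of order \<open>n^{-1/2}\<close>
  at every point, which accounts for the forest entries.
\<close>

section \<open>Binomial probabilities\<close>

definition binom_prob :: "real \<Rightarrow> nat \<Rightarrow> nat \<Rightarrow> real" where
  "binom_prob p m j = real (m choose j) * p ^ j * (1 - p) ^ (m - j)"

lemma binom_prob_nonneg: "0 \<le> p \<Longrightarrow> p \<le> 1 \<Longrightarrow> 0 \<le> binom_prob p m j"
  unfolding binom_prob_def by simp

lemma binom_prob_eq_0: "m < j \<Longrightarrow> binom_prob p m j = 0" by (simp add: binom_prob_def)

lemma sum_binom_prob: "(\<Sum>j\<le>m. binom_prob p m j) = 1"
  using binomial_ring[of p "1-p" m] by (simp add: binom_prob_def)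

lemma binom_prob_le_1: "0 \<le> p \<Longrightarrow> p \<le> 1 \<Longrightarrow> binom_prob p m j \<le> 1"
proof (cases "j \<le> m")
  case True
  assume p: "0 \<le> p" "p \<le> 1"
  have "binom_prob p m j \<le> (\<Sum>j\<le>m. binom_prob p m j)"
    by (rule member_le_sum) (use True p in \<open>auto intro: binom_prob_nonneg\<close>)
  then show ?thesis by (simp add: sum_binom_prob)
qed (simp add: binom_prob_eq_0)

lemma choose_Suc_mult: "j < m \<Longrightarrow> (m choose Suc j) * Suc j = (m choose j) * (m - j)"
proof -
  assume "j < m"
  then obtain n where n: "m = Suc n" by (cases m) auto
  have "(m choose Suc j) * Suc j = Suc n * (n choose j)"
    using Suc_times_binomial_eq[of n j] n by simp
  moreover have "(m choose j) * (m - j) = Suc n * (n choose j)"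
    using binomial_absorb_comp[of m j] n by (simp add: mult.commute)
  ultimately show ?thesis by simp
qed

lemma binom_prob_Suc_ratio:
  assumes "j < m"
  shows "binom_prob p m (Suc j) * (real j + 1) * (1 - p) = binom_prob p m j * (real m - real j) * p"
proof -
  have c: "real (m choose Suc j) * (real j + 1) = real (m choose j) * (real m - real j)"
    using choose_Suc_mult[OF assms] assms
    by (metis of_nat_Suc of_nat_diff of_nat_mult less_imp_le add.commute)
  have e: "m - j = Suc (m - Suc j)" using assms by simp
  have "binom_prob p m (Suc j) * (real j + 1) * (1 - p) = (real (m choose Suc j) * (real j + 1)) * (p * p^j) * ((1 - p) ^ (m - Suc j) * (1 - p))"
    by (simp add: binom_prob_def mult_ac)
  also have "\<dots> = (real (m choose j) * (real m - real j)) * (p * p^j) * (1-p)^(m-j)"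
    using c e by simp
  also have "\<dots> = binom_prob p m j * (real m - real j) * p" by (simp add: binom_prob_def mult_ac)
  finally show ?thesis .
qed

lemma binom_prob_Suc_le:
  assumes "0 < p" "p < 1" "j < m" "real m * p \<le> real j"
  shows "binom_prob p m (Suc j) \<le> binom_prob p m j"
proof -
  have h: "(real m - real j) * p \<le> (real j + 1) * (1 - p)"
    using assms by (simp add: algebra_simps)
  have pos: "0 < (real j + 1) * (1 - p)" using assms by simp
  have "binom_prob p m (Suc j) * ((real j + 1) * (1 - p)) = binom_prob p m j * ((real m - real j) * p)"
    using binom_prob_Suc_ratio[OF assms(3), of p] by (simp add: algebra_simps)
  also have "\<dots> \<le> binom_prob p m j * ((real j + 1) * (1 - p))"
    by (rule mult_left_mono[OF h]) (use assms in \<open>simp add: binom_prob_nonneg\<close>)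
  finally have X: "binom_prob p m (Suc j) * ((real j + 1) * (1 - p)) \<le> binom_prob p m j * ((real j + 1) * (1 - p))" .
  show ?thesis by (rule mult_right_le_imp_le[OF X pos])
qed

lemma binom_prob_le_Suc:
  assumes "0 < p" "p < 1" "j < m" "real j + 1 \<le> real m * p"
  shows "binom_prob p m j \<le> binom_prob p m (Suc j)"
proof -
  have h: "(real j + 1) * (1 - p) \<le> (real m - real j) * p"
    using assms by (simp add: algebra_simps)
  have pos: "0 < (real j + 1) * (1 - p)" using assms by simp
  have "binom_prob p m j * ((real j + 1) * (1 - p)) \<le> binom_prob p m j * ((real m - real j) * p)"
    by (rule mult_left_mono[OF h]) (use assms in \<open>simp add: binom_prob_nonneg\<close>)
  also have "\<dots> = binom_prob p m (Suc j) * ((real j + 1) * (1 - p))"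
    using binom_prob_Suc_ratio[OF assms(3), of p] by (simp add: algebra_simps)
  finally have X: "binom_prob p m j * ((real j + 1) * (1 - p)) \<le> binom_prob p m (Suc j) * ((real j + 1) * (1 - p))" .
  show ?thesis by (rule mult_right_le_imp_le[OF X pos])
qed

lemma le_of_Suc_steps:
  fixes f :: "nat \<Rightarrow> real"
  assumes "\<And>i. a \<le> i \<Longrightarrow> i < b \<Longrightarrow> f i \<le> f (Suc i)" "a \<le> b"
  shows "f a \<le> f b"
  using assms(2,1) by (induction b rule: dec_induct) (auto intro: order.trans)

lemma ge_of_Suc_steps:
  fixes f :: "nat \<Rightarrow> real"
  assumes "\<And>i. a \<le> i \<Longrightarrow> i < b \<Longrightarrow> f (Suc i) \<le> f i" "a \<le> b"
  shows "f b \<le> f a"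
  using le_of_Suc_steps[of a b "\<lambda>i. - f i"] assms by simp

lemma binom_prob_le_near_mean:
  assumes "0 < p" "p < 1"
  shows "\<exists>j'. j' \<le> m \<and> \<bar>real j' - real m * p\<bar> \<le> 1 \<and> binom_prob p m j \<le> binom_prob p m j'"
proof -
  define a where "a = nat \<lfloor>real m * p\<rfloor>"
  define c where "c = nat \<lceil>real m * p\<rceil>"
  have mp0: "0 \<le> real m * p" using assms by simp
  have mpm: "real m * p \<le> real m" using assms by (simp add: mult_left_le)
  have ra: "real a = of_int \<lfloor>real m * p\<rfloor>" unfolding a_def using mp0 by simp
  have rc: "real c = of_int \<lceil>real m * p\<rceil>" unfolding c_def using mp0 by simp
  have a1: "\<bar>real a - real m * p\<bar> \<le> 1" using ra
    by (smt (verit) of_int_floor_le real_of_int_floor_add_one_gt)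
  have c1: "\<bar>real c - real m * p\<bar> \<le> 1" using rc
    by (smt (verit) le_of_int_ceiling ceiling_correct)
  have am: "a \<le> m" using ra mpm by (smt (verit) of_int_floor_le of_nat_le_iff)
  have cm: "c \<le> m" using rc mpm
    by (metis ceiling_le_iff ceiling_of_nat nat_le_iff of_int_of_nat_eq of_nat_le_iff c_def)
  show ?thesis
  proof (cases "real j \<le> real m * p")
    case True
    have ja: "j \<le> a" using True ra by (smt (verit) floor_le_iff of_int_of_nat_eq of_nat_le_iff le_floor_iff)
    have "binom_prob p m j \<le> binom_prob p m a"
    proof (rule le_of_Suc_steps[OF _ ja])
      fix i assume i: "j \<le> i" "i < a"
      have "real i + 1 \<le> real a" using i by simp
      also have "\<dots> \<le> real m * p" using ra by simp
      finally show "binom_prob p m i \<le> binom_prob p m (Suc i)"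
        using binom_prob_le_Suc[OF assms] i am by simp
    qed
    then show ?thesis using a1 am by blast
  next
    case False
    show ?thesis
    proof (cases "j \<le> m")
      case jm: True
      have cj: "c \<le> j" using False rc
        by (smt (verit) ceiling_le_iff ceiling_of_nat nat_le_iff of_int_of_nat_eq c_def of_nat_le_iff)
      have "binom_prob p m j \<le> binom_prob p m c"
      proof (rule ge_of_Suc_steps[OF _ cj])
        fix i assume i: "c \<le> i" "i < j"
        have "real m * p \<le> real c" using rc by simp
        also have "\<dots> \<le> real i" using i by simp
        finally show "binom_prob p m (Suc i) \<le> binom_prob p m i"
          using binom_prob_Suc_le[OF assms] i jm by simp
      qed
      then show ?thesis using c1 cm by blast
    next
      case jm: False
      then have "binom_prob p m j = 0" by (simp add: binom_prob_eq_0)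
      then show ?thesis using a1 am binom_prob_nonneg[of p m a] assms by auto
    qed
  qed
qed

lemma exp_minus_two_le:
  fixes a :: real assumes "0 \<le> a" "a \<le> 1/2" shows "exp (-2*a) \<le> 1 - a"
proof -
  have l: "-a - 2*a^2 \<le> ln (1-a)" by (rule ln_one_minus_pos_lower_bound) (use assms in auto)
  have "a*a \<le> a*(1/2)" by (rule mult_left_mono) (use assms in auto)
  then have "-2*a \<le> ln (1-a)" using l by (simp add: power2_eq_square)
  then have "exp (-2*a) \<le> exp (ln (1-a))" by simp
  also have "\<dots> = 1 - a" using assms by simp
  finally show ?thesis .
qed

lemma exp_bounds_of_rel_error:
  fixes x Z a :: real
  assumes Z: "0 < Z" and a: "0 \<le> a" "a \<le> 1/2" and x: "\<bar>x - Z\<bar> \<le> a * Z"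
  shows "exp (-2*a) * Z \<le> x" and "x \<le> exp a * Z"
proof -
  have "exp (-2*a) * Z \<le> (1 - a) * Z" using exp_minus_two_le[OF a] Z by simp
  then show "exp (-2*a) * Z \<le> x" using x by (simp add: algebra_simps)
  have "(1 + a) * Z \<le> exp a * Z" using exp_ge_add_one_self[of a] Z by (simp add: add.commute)
  then show "x \<le> exp a * Z" using x by (simp add: algebra_simps)
qed

lemma exp_ratio_lower:
  fixes x y Z a b :: real
  assumes Z: "0 < Z" and a: "0 \<le> a" "a \<le> 1/2" and b: "0 \<le> b" "b \<le> 1/2"
    and x: "\<bar>x - Z\<bar> \<le> a * Z" and y: "\<bar>y - Z\<bar> \<le> b * Z"
  shows "exp (-(2*a + 2*b)) * y \<le> x"
proof -
  have "exp (-(2*a + 2*b)) * y \<le> exp (-(2*a + 2*b)) * (exp b * Z)"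
    using exp_bounds_of_rel_error(2)[OF Z b y] by simp
  also have "\<dots> = exp (-2*a) * Z * exp (-b)" by (simp add: mult_ac flip: exp_add)
  also have "\<dots> \<le> exp (-2*a) * Z" using b Z by (intro mult_left_le) auto
  also have "\<dots> \<le> x" by (rule exp_bounds_of_rel_error(1)[OF Z a x])
  finally show ?thesis .
qed

lemma binom_prob_Suc_comparable:
  fixes p K :: real and m i :: nat
  defines "\<delta> \<equiv> 2*(K/(1-p) + (K+1)/p) / sqrt m"
  assumes p: "0 < p" "p < 1" and K: "0 \<le> K" and sq1: "1 \<le> sqrt m"
    and sa: "2*K/(1-p) \<le> sqrt m" and sb: "2*(K+1)/p \<le> sqrt m"
    and i: "i < m" "\<bar>real i - real m * p\<bar> \<le> K * sqrt m"
  shows "exp (-\<delta>) * binom_prob p m i \<le> binom_prob p m (Suc i)"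
    and "exp (-\<delta>) * binom_prob p m (Suc i) \<le> binom_prob p m i"
proof -
  define a where "a = K / ((1-p) * sqrt m)"
  define b where "b = (K+1) / (p * sqrt m)"
  define Z where "Z = p * (1-p) * real m"
  define num where "num = (real m - real i) * p"
  define den where "den = (real i + 1) * (1 - p)"
  have sq0: "0 < sqrt m" using sq1 by simp
  have Z0: "0 < Z" unfolding Z_def using p i by simp
  have a: "0 \<le> a" "a \<le> 1/2" unfolding a_def using K p sq0 sa by (auto simp: field_simps)
  have b: "0 \<le> b" "b \<le> 1/2" unfolding b_def using K p sq0 sb by (auto simp: field_simps)
  have \<delta>: "\<delta> = 2*a + 2*b"
    unfolding \<delta>_def a_def b_def by (simp add: add_divide_distrib)
  have msq: "real m = sqrt m * sqrt m" by simp
  have num_Z: "\<bar>num - Z\<bar> \<le> a * Z"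
  proof -
    have "num - Z = - (p * (real i - real m * p))" unfolding num_def Z_def by (simp add: algebra_simps)
    then have "\<bar>num - Z\<bar> = p * \<bar>real i - real m * p\<bar>" using p by (simp add: abs_mult)
    also have "\<dots> \<le> p * (K * sqrt m)" using i(2) p by simp
    also have "\<dots> = a * Z" unfolding a_def Z_def using p sq0 by (subst msq) (simp add: field_simps)
    finally show ?thesis .
  qed
  have den_Z: "\<bar>den - Z\<bar> \<le> b * Z"
  proof -
    have "den - Z = (1-p) * (real i - real m * p + 1)" unfolding den_def Z_def by (simp add: algebra_simps)
    then have "\<bar>den - Z\<bar> = (1-p) * \<bar>real i - real m * p + 1\<bar>" using p by (simp add: abs_mult)
    also have "\<dots> \<le> (1-p) * (K * sqrt m + sqrt m)" proof (rule mult_left_mono)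
      show "\<bar>real i - real m * p + 1\<bar> \<le> K * sqrt m + sqrt m" using i(2) sq1 by linarith
    qed (use p in simp)
    also have "\<dots> = b * Z" unfolding b_def Z_def using p sq0 by (subst msq) (simp add: field_simps)
    finally show ?thesis .
  qed
  have num_den: "exp (-\<delta>) * den \<le> num"
    unfolding \<delta> by (rule exp_ratio_lower[OF Z0 a b num_Z den_Z])
  have den_num: "exp (-\<delta>) * num \<le> den"
    using exp_ratio_lower[OF Z0 b a den_Z num_Z] unfolding \<delta> by (simp add: add.commute)
  have ratio: "binom_prob p m (Suc i) * den = binom_prob p m i * num"
    using binom_prob_Suc_ratio[OF i(1), of p] unfolding den_def num_def by (simp add: mult_ac)
  have den0: "0 < den" and num0: "0 < num" unfolding den_def num_def using p i by auto
  have nonneg: "0 \<le> binom_prob p m i" "0 \<le> binom_prob p m (Suc i)" using p by (auto intro: binom_prob_nonneg)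
  have "exp (-\<delta>) * binom_prob p m i * den \<le> binom_prob p m (Suc i) * den"
    using mult_left_mono[OF num_den nonneg(1)] ratio by (simp add: mult_ac)
  then show "exp (-\<delta>) * binom_prob p m i \<le> binom_prob p m (Suc i)" using den0 by simp
  have "exp (-\<delta>) * binom_prob p m (Suc i) * num \<le> binom_prob p m i * num"
    using mult_left_mono[OF den_num nonneg(2)] ratio by (simp add: mult_ac)
  then show "exp (-\<delta>) * binom_prob p m (Suc i) \<le> binom_prob p m i" using num0 by simp
qed

lemma binom_prob_steps_comparable:
  fixes p K :: real and m j k :: nat
  defines "\<delta> \<equiv> 2*(K/(1-p) + (K+1)/p) / sqrt m"
  assumes p: "0 < p" "p < 1" and K: "0 \<le> K" and sq1: "1 \<le> sqrt m"
    and sa: "2*K/(1-p) \<le> sqrt m" and sb: "2*(K+1)/p \<le> sqrt m"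
    and jk: "j + k \<le> m"
    and window: "\<And>i. j \<le> i \<Longrightarrow> i \<le> j + k \<Longrightarrow> \<bar>real i - real m * p\<bar> \<le> K * sqrt m"
  shows "exp (-\<delta> * k) * binom_prob p m j \<le> binom_prob p m (j + k)"
    and "exp (-\<delta> * k) * binom_prob p m (j + k) \<le> binom_prob p m j"
proof -
  have step: "exp (-\<delta>) * binom_prob p m i \<le> binom_prob p m (Suc i)"
    "exp (-\<delta>) * binom_prob p m (Suc i) \<le> binom_prob p m i"
    if "i < m" "\<bar>real i - real m * p\<bar> \<le> K * sqrt m" for i
    unfolding \<delta>_def using binom_prob_Suc_comparable[OF p K sq1 sa sb that] by simp_all
  show "exp (-\<delta> * k) * binom_prob p m j \<le> binom_prob p m (j + k)"
    using jk window
  proof (induction k)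
    case (Suc k)
    have IH: "exp (-\<delta> * k) * binom_prob p m j \<le> binom_prob p m (j + k)"
      by (rule Suc.IH) (use Suc.prems in auto)
    have near: "\<bar>real (j + k) - real m * p\<bar> \<le> K * sqrt m" by (rule Suc.prems(2)) auto
    have "exp (-\<delta> * Suc k) * binom_prob p m j = exp (-\<delta>) * (exp (-\<delta> * k) * binom_prob p m j)"
      by (simp add: algebra_simps flip: exp_add)
    also have "\<dots> \<le> exp (-\<delta>) * binom_prob p m (j + k)" using IH by simp
    also have "\<dots> \<le> binom_prob p m (j + Suc k)" using step(1)[of "j + k"] Suc.prems(1) near by simp
    finally show ?case .
  qed simp
  show "exp (-\<delta> * k) * binom_prob p m (j + k) \<le> binom_prob p m j"
    using jk window
  proof (induction k)
    case (Suc k)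
    have IH: "exp (-\<delta> * k) * binom_prob p m (j + k) \<le> binom_prob p m j"
      by (rule Suc.IH) (use Suc.prems in auto)
    have near: "\<bar>real (j + k) - real m * p\<bar> \<le> K * sqrt m" by (rule Suc.prems(2)) auto
    have "exp (-\<delta> * Suc k) * binom_prob p m (j + Suc k)
        = exp (-\<delta> * k) * (exp (-\<delta>) * binom_prob p m (Suc (j + k)))"
      by (simp add: algebra_simps flip: exp_add)
    also have "\<dots> \<le> exp (-\<delta> * k) * binom_prob p m (j + k)"
      using step(2)[of "j + k"] Suc.prems(1) near by (intro mult_left_mono) auto
    also have "\<dots> \<le> binom_prob p m j" by (rule IH)
    finally show ?case .
  qed simp
qed

lemma binom_prob_comparable_near_mean:
  fixes p K :: real and m j j' :: nat
  assumes p: "0 < p" "p < 1" and K: "0 \<le> K" and sq1: "1 \<le> sqrt m"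
    and sa: "2*K/(1-p) \<le> sqrt m" and sb: "2*(K+1)/p \<le> sqrt m"
    and j: "j \<le> m" "\<bar>real j - real m * p\<bar> \<le> K * sqrt m"
    and j': "j' \<le> m" "\<bar>real j' - real m * p\<bar> \<le> K * sqrt m"
  shows "exp (- (4*K*(K/(1-p) + (K+1)/p))) * binom_prob p m j \<le> binom_prob p m j'"
proof -
  define \<delta> where "\<delta> = 2*(K/(1-p) + (K+1)/p) / sqrt m"
  have sq0: "0 < sqrt m" using sq1 by simp
  have "\<delta> * \<bar>real j' - real j\<bar> \<le> \<delta> * (2*K * sqrt m)"
    using j(2) j'(2) p K sq0 unfolding \<delta>_def by (intro mult_left_mono) auto
  also have "\<dots> = 4*K*(K/(1-p) + (K+1)/p)" unfolding \<delta>_def using sq0 by simp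
  finally have \<delta>_dist: "exp (- (4*K*(K/(1-p) + (K+1)/p))) \<le> exp (-\<delta> * \<bar>real j' - real j\<bar>)" by simp
  have window: "\<bar>real i - real m * p\<bar> \<le> K * sqrt m" if "min j j' \<le> i" "i \<le> max j j'" for i
    using that j(2) j'(2) by (cases "j \<le> j'") (auto simp: abs_le_iff)
  have "exp (-\<delta> * \<bar>real j' - real j\<bar>) * binom_prob p m j \<le> binom_prob p m j'"
  proof (cases "j \<le> j'")
    case True
    then show ?thesis
      using binom_prob_steps_comparable(1)[OF p K sq1 sa sb, of j "j' - j"] j' window
      unfolding \<delta>_def by (simp add: of_nat_diff)
  next
    case False
    then show ?thesis
      using binom_prob_steps_comparable(2)[OF p K sq1 sa sb, of j' "j - j'"] j window
      unfolding \<delta>_def by (simp add: of_nat_diff)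
  qed
  moreover have "0 \<le> binom_prob p m j" using p by (simp add: binom_prob_nonneg)
  ultimately show ?thesis using \<delta>_dist by (meson mult_right_mono order_trans)
qed

lemma binom_prob_window_mass:
  assumes "0 \<le> p" "p \<le> 1" "0 < m"
  shows "1/3 \<le> (\<Sum>j\<in>{j. j \<le> m \<and> \<bar>real j - real m * p\<bar> < sqrt m}. binom_prob p m j)"
proof -
  define M where "M = binomial_pmf m p"
  define A where "A = {x::nat. sqrt m \<le> \<bar>real x - real m * p\<bar>}"
  define B where "B = {j. j \<le> m \<and> \<bar>real j - real m * p\<bar> < sqrt m}"
  have bd: "binomial_distribution p" using assms by unfold_locales auto
  have "measure_pmf.prob M A \<le> 2 * exp (- 2 * (sqrt m)\<^sup>2 / real m)"
    unfolding M_def A_def by (rule binomial_distribution.prob_abs_ge[OF bd assms(3)]) simp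
  also have "\<dots> = 2 * exp (-2)" using assms by simp
  also have "\<dots> \<le> 2/3"
  proof -
    have "3 \<le> exp (2::real)" using exp_ge_add_one_self[of 2] by simp
    then have "exp (-2::real) \<le> 1/3" by (simp add: exp_minus field_simps)
    then show ?thesis by simp
  qed
  finally have pA: "measure_pmf.prob M A \<le> 2/3" .
  have "measure_pmf.prob M (UNIV - A) = 1 - measure_pmf.prob M A"
    using measure_pmf.prob_compl[of A M] by simp
  then have pB1: "1/3 \<le> measure_pmf.prob M (UNIV - A)" using pA by simp
  have sub: "(UNIV - A) \<inter> set_pmf M \<subseteq> B"
    unfolding A_def B_def M_def using assms by (auto simp: set_pmf_binomial_eq split: if_splits)
  have "measure_pmf.prob M (UNIV - A) = measure_pmf.prob M ((UNIV - A) \<inter> set_pmf M)"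
    by (simp add: measure_Int_set_pmf)
  also have "\<dots> \<le> measure_pmf.prob M B"
    by (rule measure_pmf.finite_measure_mono[OF sub]) simp
  also have "\<dots> = sum (pmf M) B"
    by (rule measure_measure_pmf_finite) (simp add: B_def)
  also have "\<dots> = (\<Sum>j\<in>B. binom_prob p m j)"
    unfolding M_def binom_prob_def using assms by (intro sum.cong refl) (simp add: pmf_binomial)
  finally show ?thesis using pB1 unfolding B_def by simp
qed

lemma card_nat_interval:
  fixes a L :: real assumes "0 \<le> L"
  shows "real (card {j::nat. a \<le> real j \<and> real j \<le> a + L}) \<le> L + 1"
proof -
  define S where "S = {j::nat. a \<le> real j \<and> real j \<le> a + L}"
  have sub: "int ` S \<subseteq> {\<lceil>a\<rceil> .. \<lfloor>a + L\<rfloor>}"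
    unfolding S_def by (auto simp: ceiling_le_iff le_floor_iff)
  have "card S = card (int ` S)" by (simp add: card_image)
  also have "\<dots> \<le> card {\<lceil>a\<rceil> .. \<lfloor>a + L\<rfloor>}" by (rule card_mono[OF _ sub]) simp
  also have "\<dots> = nat (\<lfloor>a + L\<rfloor> - \<lceil>a\<rceil> + 1)" by simp
  finally have c: "real (card S) \<le> real (nat (\<lfloor>a + L\<rfloor> - \<lceil>a\<rceil> + 1))" by linarith
  have "real (nat (\<lfloor>a + L\<rfloor> - \<lceil>a\<rceil> + 1)) \<le> L + 1"
  proof (cases "\<lfloor>a + L\<rfloor> - \<lceil>a\<rceil> + 1 \<ge> 0")
    case True
    then have "real (nat (\<lfloor>a + L\<rfloor> - \<lceil>a\<rceil> + 1)) = of_int \<lfloor>a + L\<rfloor> - of_int \<lceil>a\<rceil> + 1" by simp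
    also have "\<dots> \<le> (a + L) - a + 1" using of_int_floor_le[of "a+L"] le_of_int_ceiling[of a] by linarith
    finally show ?thesis by simp
  qed (use assms in simp)
  then show ?thesis using c unfolding S_def by linarith
qed

lemma ex_ge_average:
  fixes f :: "nat \<Rightarrow> real"
  assumes "finite W" "s \<le> sum f W" "0 < s"
  shows "\<exists>j\<in>W. s / card W \<le> f j"
proof (rule ccontr)
  assume "\<not> ?thesis"
  then have lt: "\<And>j. j \<in> W \<Longrightarrow> f j < s / card W" by auto
  have "W \<noteq> {}" using assms by auto
  then have c: "0 < card W" using assms by auto
  have "sum f W < of_nat (card W) * (s / card W)" by (rule sum_bounded_above_strict[OF lt c])
  also have "\<dots> = s" using c by simp
  finally show False using assms by simp
qed

lemma le_sqrt_if_ceiling_sq_le: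
  fixes T :: real assumes "0 \<le> T" "nat \<lceil>T^2\<rceil> \<le> m" shows "T \<le> sqrt (real m)"
proof -
  have "T^2 \<le> real m" using assms(2) by simp
  then have "sqrt (T^2) \<le> sqrt (real m)" by (rule real_sqrt_le_mono)
  then show ?thesis using assms by simp
qed

lemma ex_binom_prob_large_near_mean:
  assumes p: "0 < p" "p < 1" and sq1: "1 \<le> sqrt m"
  obtains j0 where "j0 \<le> m" "\<bar>real j0 - real m * p\<bar> < sqrt m" "1 / (9 * sqrt m) \<le> binom_prob p m j0"
proof -
  have sq0: "0 < sqrt m" using sq1 by simp
  define W where "W = {j. j \<le> m \<and> \<bar>real j - real m * p\<bar> < sqrt m}"
  have mass: "1/3 \<le> sum (binom_prob p m) W"
    unfolding W_def using binom_prob_window_mass[of p m] p sq1 by (cases m) auto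
  have fW: "finite W" unfolding W_def by simp
  have "W \<subseteq> {j::nat. real m * p - sqrt m \<le> real j \<and> real j \<le> (real m * p - sqrt m) + 2 * sqrt m}"
    unfolding W_def by auto
  then have "card W \<le> card {j::nat. real m * p - sqrt m \<le> real j \<and> real j \<le> (real m * p - sqrt m) + 2 * sqrt m}"
    by (rule card_mono[rotated]) (rule finite_subset[of _ "{..nat \<lceil>real m * p + sqrt m\<rceil>}"], auto simp: le_nat_iff le_ceiling_iff)
  also have "real \<dots> \<le> 2 * sqrt m + 1" by (rule card_nat_interval) (use sq0 in simp)
  finally have card_W: "real (card W) \<le> 3 * sqrt m" using sq1 by linarith
  obtain j0 where j0: "j0 \<in> W" "(1/3) / card W \<le> binom_prob p m j0"
    using ex_ge_average[OF fW mass] by auto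
  have "0 < card W" using j0(1) fW card_gt_0_iff by blast
  then have "1 / (9 * sqrt m) \<le> (1/3) / card W" using card_W sq0 by (simp add: field_simps)
  then show ?thesis using that j0 unfolding W_def by force
qed

lemma binom_prob_local_lower:
  assumes p: "0 < p" "p < 1" and K: "0 \<le> K"
  shows "\<exists>c>0. \<exists>m0. \<forall>m\<ge>m0. \<forall>j\<le>m. \<bar>real j - real m * p\<bar> \<le> K * sqrt m \<longrightarrow> c / sqrt m \<le> binom_prob p m j"
proof -
  define K' where "K' = max K 1"
  define \<Lambda> where "\<Lambda> = 4*K'*(K'/(1-p) + (K'+1)/p)"
  define T where "T = 1 + 2*K'/(1-p) + 2*(K'+1)/p"
  have K': "1 \<le> K'" "K \<le> K'" unfolding K'_def by auto
  have T0: "0 \<le> T" unfolding T_def using p K' by simp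
  show ?thesis
  proof (intro exI conjI allI impI)
    show "0 < exp (-\<Lambda>) / 9" by simp
    fix m j assume m: "nat \<lceil>T^2\<rceil> \<le> m" and j: "j \<le> m" "\<bar>real j - real m * p\<bar> \<le> K * sqrt m"
    have "T \<le> sqrt m" by (rule le_sqrt_if_ceiling_sq_le[OF T0 m])
    moreover have "0 \<le> 2*K'/(1-p)" "0 \<le> 2*(K'+1)/p" using p K' by auto
    ultimately have sq1: "1 \<le> sqrt m" and sa: "2*K'/(1-p) \<le> sqrt m" and sb: "2*(K'+1)/p \<le> sqrt m"
      unfolding T_def by linarith+
    obtain j0 where j0: "j0 \<le> m" "\<bar>real j0 - real m * p\<bar> < sqrt m" "1 / (9 * sqrt m) \<le> binom_prob p m j0"
      using ex_binom_prob_large_near_mean[OF p sq1] by blast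
    have "1 * sqrt m \<le> K' * sqrt m" "K * sqrt m \<le> K' * sqrt m"
      using K' by (intro mult_right_mono; simp)+
    then have "\<bar>real j0 - real m * p\<bar> \<le> K' * sqrt m" "\<bar>real j - real m * p\<bar> \<le> K' * sqrt m"
      using j0(2) j(2) by linarith+
    then have "exp (-\<Lambda>) * binom_prob p m j0 \<le> binom_prob p m j"
      unfolding \<Lambda>_def using K' by (intro binom_prob_comparable_near_mean[OF p _ sq1 sa sb j0(1) _ j(1)]) auto
    moreover have "exp (-\<Lambda>) / 9 / sqrt m \<le> exp (-\<Lambda>) * binom_prob p m j0"
      using mult_left_mono[OF j0(3), of "exp (-\<Lambda>)"] by simp
    ultimately show "exp (-\<Lambda>) / 9 / sqrt m \<le> binom_prob p m j" by linarith
  qed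
qed

lemma binom_prob_block_le:
  assumes p: "0 \<le> p" "p \<le> 1" and block: "{a..<a+N} \<subseteq> {..m}"
    and lower: "\<And>i. i \<in> {a..<a+N} \<Longrightarrow> c \<le> binom_prob p m i"
  shows "real N * c \<le> 1"
proof -
  have "real N * c = (\<Sum>i\<in>{a..<a+N}. c)" by simp
  also have "\<dots> \<le> (\<Sum>i\<in>{a..<a+N}. binom_prob p m i)" by (rule sum_mono) (rule lower)
  also have "\<dots> \<le> (\<Sum>i\<le>m. binom_prob p m i)"
    by (rule sum_mono2[OF _ block]) (use p in \<open>auto intro: binom_prob_nonneg\<close>)
  finally show ?thesis by (simp add: sum_binom_prob)
qed

lemma binom_prob_local_upper:
  assumes p: "0 < p" "p < 1"
  shows "\<exists>C. \<exists>m0. \<forall>m\<ge>m0. \<forall>j. binom_prob p m j \<le> C / sqrt m"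
proof -
  define \<Lambda> where "\<Lambda> = 4*2*(2/(1-p) + (2+1)/p)"
  define T where "T = 2 + 2*2/(1-p) + 2*(2+1)/p"
  have T0: "0 \<le> T" unfolding T_def using p by simp
  show ?thesis
  proof (intro exI allI impI)
    fix m j assume m: "nat \<lceil>T^2\<rceil> \<le> m"
    have "T \<le> sqrt m" by (rule le_sqrt_if_ceiling_sq_le[OF T0 m])
    moreover have "0 \<le> 2*2/(1-p)" "0 \<le> 2*(2+1)/p" using p by auto
    ultimately have sq2: "2 \<le> sqrt m" and sa: "2*2/(1-p) \<le> sqrt m" and sb: "2*(2+1)/p \<le> sqrt m"
      unfolding T_def by linarith+
    have sq1: "1 \<le> sqrt m" using sq2 by linarith
    obtain js where js: "js \<le> m" "\<bar>real js - real m * p\<bar> \<le> 1" "binom_prob p m j \<le> binom_prob p m js"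
      using binom_prob_le_near_mean[OF p] by blast
    have near_js: "\<bar>real js - real m * p\<bar> \<le> 2 * sqrt m" using js(2) sq1 by linarith
    define a where "a = nat \<lceil>real m * p\<rceil>"
    define N where "N = nat \<lfloor>sqrt m\<rfloor>"
    have a: "real m * p \<le> real a" "real a < real m * p + 1"
      unfolding a_def using p by (auto simp: of_nat_nat ceiling_correct)
         (smt (verit) ceiling_correct of_int_ceiling_le_add_one)
    have N: "sqrt m - 1 < real N" "real N \<le> sqrt m" unfolding N_def using sq1 by (auto simp: of_nat_nat)
    have "4 * sqrt m \<le> ((1-p) * sqrt m) * sqrt m"
      using sa p sq1 by (intro mult_right_mono) (auto simp: field_simps)
    then have "4 * sqrt m \<le> real m - real m * p" by (simp add: algebra_simps)
    then have room: "real m * p + 1 + sqrt m \<le> real m" using sq1 by linarith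
    have block: "i \<le> m \<and> \<bar>real i - real m * p\<bar> \<le> 2 * sqrt m" if "i \<in> {a..<a+N}" for i
    proof -
      have i: "real a \<le> real i" "real i < real m * p + 1 + sqrt m" using that a N by auto
      then have "real i \<le> real m" using room by linarith
      moreover have "\<bar>real i - real m * p\<bar> \<le> 2 * sqrt m"
        unfolding abs_le_iff using i a sq1 by (intro conjI; linarith)
      ultimately show ?thesis by simp
    qed
    have "real N * (exp (-\<Lambda>) * binom_prob p m js) \<le> 1"
    proof (rule binom_prob_block_le)
      show "exp (-\<Lambda>) * binom_prob p m js \<le> binom_prob p m i" if "i \<in> {a..<a+N}" for i
        using block[OF that] unfolding \<Lambda>_def
        by (intro binom_prob_comparable_near_mean[OF p _ sq1 sa sb js(1) near_js]) auto
    qed (use p block in auto)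
    moreover have "sqrt m / 2 \<le> real N" using N sq2 by linarith
    moreover have "0 \<le> exp (-\<Lambda>) * binom_prob p m js" using p by (simp add: binom_prob_nonneg)
    ultimately have "sqrt m / 2 * (exp (-\<Lambda>) * binom_prob p m js) \<le> 1"
      by (meson mult_right_mono order_trans)
    then have "binom_prob p m js \<le> 2 * exp \<Lambda> / sqrt m"
      using sq1 by (simp add: field_simps exp_minus)
    then show "binom_prob p m j \<le> 2 * exp \<Lambda> / sqrt m" using js(3) by linarith
  qed
qed

lemma power_eq_exp_ln: "0 < y \<Longrightarrow> y ^ j = exp (real j * ln y)"
  by (simp add: exp_of_nat_mult)

lemma binom_prob_0_eq_exp_KL:
  assumes "0 < a" "a < 1" shows "binom_prob a m 0 = exp (- real m * KL 0 a)"
  using assms by (simp add: binom_prob_def KL_def power_eq_exp_ln ln_div)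

lemma binom_prob_all_eq_exp_KL:
  assumes "0 < a" "a < 1" shows "binom_prob a m m = exp (- real m * KL 1 a)"
  using assms by (simp add: binom_prob_def KL_def power_eq_exp_ln ln_div)

lemma KL_self: "KL a a = 0" unfolding KL_def by simp

lemma KL_nonneg:
  assumes x: "0 \<le> x" "x \<le> 1" and a: "0 < a" "a < 1"
  shows "0 \<le> KL x a"
proof -
  have t1: "x - a \<le> x * ln (x / a)"
  proof (cases "x = 0")
    case True then show ?thesis using a by simp
  next
    case False
    then have x0: "0 < x" using x by simp
    have "ln (a / x) \<le> a / x - 1" by (rule ln_le_minus_one) (use a x0 in simp)
    then have "1 - a / x \<le> ln (x / a)" using a x0 by (simp add: ln_div)
    then have "x * (1 - a / x) \<le> x * ln (x / a)" using x0 by (intro mult_left_mono) auto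
    moreover have "x * (1 - a / x) = x - a" using x0 by (simp add: field_simps)
    ultimately show ?thesis by simp
  qed
  have t2: "a - x \<le> (1 - x) * ln ((1 - x) / (1 - a))"
  proof (cases "x = 1")
    case True then show ?thesis using a by simp
  next
    case False
    then have x0: "0 < 1 - x" using x by simp
    have "ln ((1 - a) / (1 - x)) \<le> (1 - a) / (1 - x) - 1" by (rule ln_le_minus_one) (use a x0 in simp)
    then have "1 - (1 - a) / (1 - x) \<le> ln ((1 - x) / (1 - a))" using a x0 by (simp add: ln_div)
    then have "(1 - x) * (1 - (1 - a) / (1 - x)) \<le> (1 - x) * ln ((1 - x) / (1 - a))" using x0 by (intro mult_left_mono) auto
    moreover have "(1 - x) * (1 - (1 - a) / (1 - x)) = a - x" using x0 by (simp add: field_simps)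
    ultimately show ?thesis by simp
  qed
  show ?thesis unfolding KL_def using t1 t2 by linarith
qed

text \<open>The slope in \<open>j\<close> of \<open>ln (binom_prob a m j / binom_prob p m j)\<close>, see \<open>binom_prob_tilt\<close>.\<close>

definition tilt_slope :: "real \<Rightarrow> real \<Rightarrow> real" where
  "tilt_slope a p = ln (a / p) - ln ((1 - a) / (1 - p))"

lemma tilt_slope_self: "0 < a \<Longrightarrow> a < 1 \<Longrightarrow> tilt_slope a a = 0" unfolding tilt_slope_def by simp

lemma binom_prob_tilt:
  assumes a: "0 < a" "a < 1" and p: "0 < p" "p < 1" and j: "j \<le> m"
  shows "binom_prob a m j = binom_prob p m j * exp (- real m * KL p a + (real j - real m * p) * tilt_slope a p)"
proof -
  define A where "A = ln (a/p)"
  define B where "B = ln ((1-a)/(1-p))"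
  have rj: "real (m - j) = real m - real j" using j by simp
  have e1: "a ^ j = p ^ j * exp (real j * A)"
    using a p by (simp add: A_def power_eq_exp_ln ln_div exp_add[symmetric] algebra_simps)
  have e2: "(1-a) ^ (m-j) = (1-p) ^ (m-j) * exp (real (m-j) * B)"
    using a p by (simp add: B_def power_eq_exp_ln ln_div exp_add[symmetric] algebra_simps)
  have kl: "- real m * KL p a = real m * p * A + real m * (1-p) * B"
    unfolding KL_def A_def B_def using a p by (simp add: ln_div algebra_simps)
  have ex: "real j * A + real (m-j) * B = - real m * KL p a + (real j - real m * p) * (A - B)"
    unfolding kl rj by (simp add: algebra_simps)
  have "binom_prob a m j = real (m choose j) * (p ^ j * exp (real j * A)) * ((1-p) ^ (m-j) * exp (real (m-j) * B))"
    unfolding binom_prob_def e1 e2 ..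
  also have "\<dots> = binom_prob p m j * exp (real j * A + real (m-j) * B)"
    by (simp add: binom_prob_def exp_add mult_ac)
  finally have "binom_prob a m j = binom_prob p m j * exp (real j * A + real (m-j) * B)" .
  then have "binom_prob a m j = binom_prob p m j * exp (- real m * KL p a + (real j - real m * p) * (A - B))" by (simp only: ex)
  then show ?thesis unfolding tilt_slope_def A_def B_def .
qed

lemma binom_prob_tilt_lower:
  assumes a: "0 < a" "a < 1" and p: "0 < p" "p < 1" and j: "j \<le> m"
    and near: "\<bar>real j - real m * p\<bar> \<le> t"
  shows "exp (- real m * KL p a - t * \<bar>tilt_slope a p\<bar>) * binom_prob p m j \<le> binom_prob a m j"
proof -
  have "\<bar>(real j - real m * p) * tilt_slope a p\<bar> \<le> t * \<bar>tilt_slope a p\<bar>"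
    unfolding abs_mult using near by (rule mult_right_mono) simp
  then have "exp (- real m * KL p a - t * \<bar>tilt_slope a p\<bar>)
      \<le> exp (- real m * KL p a + (real j - real m * p) * tilt_slope a p)" by simp
  then show ?thesis
    unfolding binom_prob_tilt[OF a p j] using binom_prob_nonneg[of p m j] p
    by (simp add: mult.commute mult_left_mono)
qed

lemma binom_prob_degenerate:
  assumes a: "0 < a" "a < 1" and p: "p = 0 \<or> p = 1 \<or> m = 0" and j: "real j = real m * p"
  shows "binom_prob a m j = exp (- real m * KL p a)"
  using p
proof (elim disjE)
  assume "p = 0" then show ?thesis using j binom_prob_0_eq_exp_KL[OF a] by simp
next
  assume "p = 1" then show ?thesis using j binom_prob_all_eq_exp_KL[OF a] by simp
next
  assume "m = 0" then show ?thesis using j by (simp add: binom_prob_def)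
qed

lemma binom_prob_chernoff:
  assumes a: "0 < a" "a < 1" and j: "j \<le> m"
  shows "binom_prob a m j \<le> exp (- real m * KL (real j / real m) a)"
proof (cases "j = 0")
  case True then show ?thesis using binom_prob_0_eq_exp_KL[OF a, of m] by simp
next
  case j0: False
  show ?thesis
  proof (cases "j = m")
    case True then show ?thesis using binom_prob_all_eq_exp_KL[OF a, of m] j0 by simp
  next
    case False
    define x where "x = real j / real m"
    have m0: "0 < m" using j j0 by simp
    have x: "0 < x" "x < 1" unfolding x_def using j j0 False m0 by auto
    have t: "binom_prob a m j = binom_prob x m j * exp (- real m * KL x a + (real j - real m * x) * tilt_slope a x)"
      by (rule binom_prob_tilt[OF a x j])
    have "real j - real m * x = 0" unfolding x_def using m0 by simp
    then have "binom_prob a m j = binom_prob x m j * exp (- real m * KL x a)" using t by simp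
    also have "\<dots> \<le> 1 * exp (- real m * KL x a)"
      by (rule mult_right_mono) (use x binom_prob_le_1[of x m j] in auto)
    finally show ?thesis unfolding x_def by simp
  qed
qed

section \<open>Spanning forests\<close>

definition conn_rel :: "nat \<Rightarrow> (nat \<times> nat) set \<Rightarrow> (nat \<times> nat) set" where
  "conn_rel d E = Id_on {..<d} \<union> (E \<union> E\<inverse>)\<^sup>+"

text \<open>A spanning forest grown from the vertex set \<open>X\<close>: the list is read from its end, each pair
  \<open>(v, e)\<close> attaching a new vertex \<open>v\<close> by an edge \<open>e \<in> E\<close> to a vertex reached before.\<close>
fun attach_seq :: "nat set \<Rightarrow> (nat \<times> nat) set \<Rightarrow> (nat \<times> (nat \<times> nat)) list \<Rightarrow> bool" where
  "attach_seq X E [] = True"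
| "attach_seq X E ((v,e) # L) = (attach_seq X E L \<and> v \<notin> X \<union> fst ` set L \<and> e \<in> E \<and>
      (fst e = v \<and> snd e \<in> X \<union> fst ` set L \<or> snd e = v \<and> fst e \<in> X \<union> fst ` set L))"

lemma conn_rel_subset: "E \<subseteq> {..<d} \<times> {..<d} \<Longrightarrow> conn_rel d E \<subseteq> {..<d} \<times> {..<d}"
proof -
  assume E: "E \<subseteq> {..<d} \<times> {..<d}"
  then have "E \<union> E\<inverse> \<subseteq> {..<d} \<times> {..<d}" by auto
  then have "(E \<union> E\<inverse>)\<^sup>+ \<subseteq> {..<d} \<times> {..<d}" by (rule trancl_subset_Sigma)
  then show ?thesis unfolding conn_rel_def by auto
qed

lemma equiv_conn_rel: "E \<subseteq> {..<d} \<times> {..<d} \<Longrightarrow> equiv {..<d} (conn_rel d E)"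
proof -
  assume E: "E \<subseteq> {..<d} \<times> {..<d}"
  have s: "sym ((E \<union> E\<inverse>)\<^sup>+)" by (rule sym_trancl) (auto simp: sym_def)
  show ?thesis unfolding equiv_def
  proof (intro conjI)
    show "conn_rel d E \<subseteq> {..<d} \<times> {..<d}" by (rule conn_rel_subset[OF E])
    show "refl_on {..<d} (conn_rel d E)" unfolding refl_on_def conn_rel_def by auto
    show "sym (conn_rel d E)" using s unfolding conn_rel_def sym_def by auto
    show "trans (conn_rel d E)" unfolding conn_rel_def trans_def
      by (auto intro: trancl_trans)
  qed
qed

lemma trancl_crosses:
  assumes "(x, y) \<in> S\<^sup>+" "x \<in> X" "y \<notin> X"
  shows "\<exists>u z. (u, z) \<in> S \<and> u \<in> X \<and> z \<notin> X"
  using assms(1,3)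
proof (induction rule: trancl_induct)
  case (base y) then show ?case using assms(2) by blast
next
  case (step y z)
  show ?case
  proof (cases "y \<in> X")
    case True then show ?thesis using step by blast
  next
    case False then show ?thesis using step.IH by blast
  qed
qed

lemma attach_seq_disjoint: "attach_seq X E L \<Longrightarrow> X \<inter> fst ` set L = {}"
proof (induction L)
  case (Cons a L) then show ?case by (cases a) auto
qed simp

lemma attach_seq_distinct: "attach_seq X E L \<Longrightarrow> distinct (map fst L)"
proof (induction L)
  case (Cons a L) then show ?case by (cases a) auto
qed simp

lemma attach_seq_edges: "attach_seq X E L \<Longrightarrow> snd ` set L \<subseteq> E"
proof (induction L)
  case (Cons a L) then show ?case by (cases a) auto
qed simp

lemma attach_seq_extend:
  assumes E: "E \<subseteq> {(a,b). a < d \<and> b < d}" and R: "R \<subseteq> {..<d}"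
    and class_roots: "\<And>x. x < d \<Longrightarrow> \<exists>\<rho>\<in>R. (\<rho>, x) \<in> conn_rel d E"
  shows "attach_seq R E L \<Longrightarrow> fst ` set L \<subseteq> {..<d} \<Longrightarrow> \<exists>L'. attach_seq R E L' \<and> R \<union> fst ` set L' = {..<d}"
proof (induction "d - card (R \<union> fst ` set L)" arbitrary: L rule: less_induct)
  case less
  define X where "X = R \<union> fst ` set L"
  have Xd: "X \<subseteq> {..<d}" using R less.prems unfolding X_def by auto
  show ?case
  proof (cases "X = {..<d}")
    case True then show ?thesis using less.prems X_def by blast
  next
    case False
    then obtain y where y: "y < d" "y \<notin> X" using Xd by auto
    obtain \<rho> where \<rho>: "\<rho> \<in> R" "(\<rho>, y) \<in> conn_rel d E" using class_roots[OF y(1)] by blast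
    have "\<rho> \<noteq> y" using \<rho>(1) y(2) X_def by auto
    then have "(\<rho>, y) \<in> (E \<union> E\<inverse>)\<^sup>+" using \<rho>(2) unfolding conn_rel_def by auto
    then obtain u z where uz: "(u, z) \<in> E \<union> E\<inverse>" "u \<in> X" "z \<notin> X"
      using trancl_crosses[of \<rho> y _ X] \<rho>(1) y(2) X_def by blast
    have zd: "z < d" using uz(1) E by auto
    obtain e where e: "e \<in> E" "(fst e = z \<and> snd e \<in> X \<or> snd e = z \<and> fst e \<in> X)"
      using uz by auto
    define L' where "L' = (z, e) # L"
    have g: "attach_seq R E L'" unfolding L'_def using less.prems e uz(3) X_def by auto
    have s: "fst ` set L' \<subseteq> {..<d}" unfolding L'_def using less.prems zd by auto
    have X': "R \<union> fst ` set L' = insert z X" unfolding L'_def X_def by auto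
    have "card X < card (insert z X)" using uz(3) Xd finite_subset by (simp add: card_insert_if finite_subset[OF Xd])
    moreover have "card (insert z X) \<le> d" using Xd zd card_mono[of "{..<d}" "insert z X"] by auto
    ultimately have "d - card (R \<union> fst ` set L') < d - card (R \<union> fst ` set L)"
      using X' X_def by simp
    then show ?thesis using less.hyps g s by blast
  qed
qed

definition class_roots :: "nat \<Rightarrow> (nat \<times> nat) set \<Rightarrow> nat set" where
  "class_roots d E = {x. x < d \<and> x = Min (conn_rel d E `` {x})}"

lemma finite_conn_class: "E \<subseteq> {..<d} \<times> {..<d} \<Longrightarrow> finite (conn_rel d E `` {x})"
  using conn_rel_subset[of E d] by (auto intro: finite_subset[of _ "{..<d}"])

lemma Min_conn_class:
  assumes E: "E \<subseteq> {..<d} \<times> {..<d}" and x: "x < d"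
  shows "Min (conn_rel d E `` {x}) \<in> conn_rel d E `` {x}"
proof -
  have "x \<in> conn_rel d E `` {x}" using equiv_class_self[OF equiv_conn_rel[OF E]] x by simp
  then show ?thesis using finite_conn_class[OF E] by (intro Min_in) auto
qed

lemma ex_class_root:
  assumes E: "E \<subseteq> {..<d} \<times> {..<d}" and x: "x < d"
  shows "\<exists>\<rho>\<in>class_roots d E. (\<rho>, x) \<in> conn_rel d E"
proof -
  have eq: "equiv {..<d} (conn_rel d E)" by (rule equiv_conn_rel[OF E])
  define \<rho> where "\<rho> = Min (conn_rel d E `` {x})"
  have r1: "(x, \<rho>) \<in> conn_rel d E" using Min_conn_class[OF E x] unfolding \<rho>_def by simp
  then have r2: "(\<rho>, x) \<in> conn_rel d E" using eq unfolding equiv_def sym_def by blast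
  have rd: "\<rho> < d" using r1 conn_rel_subset[OF E] by auto
  have "conn_rel d E `` {\<rho>} = conn_rel d E `` {x}" using eq r2 rd x by (simp add: equiv_class_eq_iff)
  then have "\<rho> \<in> class_roots d E" unfolding class_roots_def using rd \<rho>_def by simp
  then show ?thesis using r2 by blast
qed

lemma class_roots_eq:
  assumes E: "E \<subseteq> {..<d} \<times> {..<d}" and r: "\<rho> \<in> class_roots d E" "v \<in> class_roots d E"
    and rv: "(\<rho>, v) \<in> conn_rel d E"
  shows "v = \<rho>"
proof -
  have eq: "equiv {..<d} (conn_rel d E)" by (rule equiv_conn_rel[OF E])
  have "conn_rel d E `` {\<rho>} = conn_rel d E `` {v}" using eq rv by (simp add: equiv_class_eq_iff)
  then show ?thesis using r unfolding class_roots_def by (metis (mono_tags, lifting) mem_Collect_eq)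
qed

lemma card_class_roots:
  assumes E: "E \<subseteq> {..<d} \<times> {..<d}"
  shows "card (class_roots d E) = card ({..<d} // conn_rel d E)"
proof -
  have eq: "equiv {..<d} (conn_rel d E)" by (rule equiv_conn_rel[OF E])
  have "bij_betw (\<lambda>x. conn_rel d E `` {x}) (class_roots d E) ({..<d} // conn_rel d E)"
  proof (rule bij_betwI')
    fix x y assume xy: "x \<in> class_roots d E" "y \<in> class_roots d E"
    show "(conn_rel d E `` {x} = conn_rel d E `` {y}) = (x = y)"
    proof
      assume "conn_rel d E `` {x} = conn_rel d E `` {y}"
      then show "x = y" using xy unfolding class_roots_def by (metis (mono_tags, lifting) mem_Collect_eq)
    qed simp
  next
    fix x assume "x \<in> class_roots d E"
    then show "conn_rel d E `` {x} \<in> {..<d} // conn_rel d E" unfolding class_roots_def by (auto intro: quotientI)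
  next
    fix C assume "C \<in> {..<d} // conn_rel d E"
    then obtain x where x: "C = conn_rel d E `` {x}" "x < d" by (auto elim: quotientE)
    obtain \<rho> where \<rho>: "\<rho> \<in> class_roots d E" "(\<rho>, x) \<in> conn_rel d E" using ex_class_root[OF E x(2)] by blast
    have "conn_rel d E `` {\<rho>} = C" using eq \<rho>(2) x(1) by (simp add: equiv_class_eq_iff)
    then show "\<exists>\<rho>\<in>class_roots d E. C = conn_rel d E `` {\<rho>}" using \<rho>(1) by blast
  qed
  then show ?thesis by (rule bij_betw_same_card)
qed

lemma card_conn_classes_le:
  assumes "E \<subseteq> {..<d} \<times> {..<d}"
  shows "card ({..<d} // conn_rel d E) \<le> d"
proof -
  have "card (class_roots d E) \<le> card {..<d}" by (rule card_mono) (auto simp: class_roots_def)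
  then show ?thesis using card_class_roots[OF assms] by simp
qed

theorem ex_spanning_attach_seq:
  assumes E: "E \<subseteq> {(a,b). a < d \<and> b < d \<and> a \<noteq> b}"
  shows "\<exists>L. attach_seq (class_roots d E) E L \<and> class_roots d E \<union> fst ` set L = {..<d}
          \<and> length L = d - card ({..<d} // conn_rel d E)"
proof -
  have E': "E \<subseteq> {..<d} \<times> {..<d}" using E by auto
  have E'': "E \<subseteq> {(a,b). a < d \<and> b < d}" using E by auto
  have R: "class_roots d E \<subseteq> {..<d}" unfolding class_roots_def by auto
  obtain L where L: "attach_seq (class_roots d E) E L" "class_roots d E \<union> fst ` set L = {..<d}"
    using attach_seq_extend[OF E'' R ex_class_root[OF E'], of "[]"] by auto
  have dis: "class_roots d E \<inter> fst ` set L = {}" by (rule attach_seq_disjoint[OF L(1)])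
  have dl: "distinct (map fst L)" by (rule attach_seq_distinct[OF L(1)])
  have "card (class_roots d E) + card (fst ` set L) = d"
    using L(2) dis card_Un_disjoint[of "class_roots d E" "fst ` set L"] R by (simp add: finite_subset)
  moreover have "card (fst ` set L) = length L" using dl distinct_card[of "map fst L"] by simp
  ultimately have "length L = d - card ({..<d} // conn_rel d E)" using card_class_roots[OF E'] by simp
  then show ?thesis using L by blast
qed

section \<open>Flows determined by a spanning forest\<close>

definition net_flow :: "nat \<Rightarrow> (nat \<Rightarrow> nat \<Rightarrow> real) \<Rightarrow> nat \<Rightarrow> real" where
  "net_flow d f v = (\<Sum>s<d. f v s) - (\<Sum>s<d. f s v)"

lemma in_F_iff_net_flow: "in_F d f \<longleftrightarrow> (\<forall>v<d. net_flow d f v = 0)"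
  unfolding in_F_def net_flow_def by simp

definition upd_entry :: "(nat \<Rightarrow> nat \<Rightarrow> real) \<Rightarrow> nat \<times> nat \<Rightarrow> real \<Rightarrow> (nat \<Rightarrow> nat \<Rightarrow> real)" where
  "upd_entry f e x = (\<lambda>r s. if (r, s) = e then x else f r s)"

definition balancing_entry :: "nat \<Rightarrow> (nat \<Rightarrow> nat \<Rightarrow> real) \<Rightarrow> nat \<Rightarrow> nat \<times> nat \<Rightarrow> real" where
  "balancing_entry d f v e = (if fst e = v then f (fst e) (snd e) - net_flow d f v else f (fst e) (snd e) + net_flow d f v)"

text \<open>The head of an attachment list is a leaf of the forest, so its edge is the only unknown
  entry at that vertex: \<open>fill_tree\<close> solves the forest entries leaf by leaf for zero net flow.\<close>
fun fill_tree :: "nat \<Rightarrow> (nat \<Rightarrow> nat \<Rightarrow> real) \<Rightarrow> (nat \<times> (nat \<times> nat)) list \<Rightarrow> (nat \<Rightarrow> nat \<Rightarrow> real)" where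
  "fill_tree d f [] = f"
| "fill_tree d f ((v, e) # L) = fill_tree d (upd_entry f e (balancing_entry d f v e)) L"

definition off_diag :: "nat \<Rightarrow> (nat \<times> nat) set" where
  "off_diag d = {(a,b). a < d \<and> b < d \<and> a \<noteq> b}"

lemma sum_upd_entry_row:
  assumes "b < d"
  shows "(\<Sum>s<d. upd_entry f (a,b) x v s) = (\<Sum>s<d. f v s) + (if v = a then x - f a b else 0)"
proof -
  have "(\<Sum>s<d. upd_entry f (a,b) x v s) = (\<Sum>s<d. f v s + (if v = a \<and> s = b then x - f a b else 0))"
    unfolding upd_entry_def by (intro sum.cong) auto
  also have "\<dots> = (\<Sum>s<d. f v s) + (\<Sum>s<d. if v = a \<and> s = b then x - f a b else 0)"
    by (rule sum.distrib)
  also have "(\<Sum>s<d. if v = a \<and> s = b then x - f a b else 0) = (if v = a then x - f a b else 0)"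
    using assms by (cases "v = a") (simp_all add: sum.delta')
  finally show ?thesis .
qed

lemma sum_upd_entry_col:
  assumes "a < d"
  shows "(\<Sum>s<d. upd_entry f (a,b) x s v) = (\<Sum>s<d. f s v) + (if v = b then x - f a b else 0)"
proof -
  have "(\<Sum>s<d. upd_entry f (a,b) x s v) = (\<Sum>s<d. f s v + (if v = b \<and> s = a then x - f a b else 0))"
    unfolding upd_entry_def by (intro sum.cong) auto
  also have "\<dots> = (\<Sum>s<d. f s v) + (\<Sum>s<d. if v = b \<and> s = a then x - f a b else 0)"
    by (rule sum.distrib)
  also have "(\<Sum>s<d. if v = b \<and> s = a then x - f a b else 0) = (if v = b then x - f a b else 0)"
    using assms by (cases "v = b") (simp_all add: sum.delta')
  finally show ?thesis .
qed

lemma net_flow_upd_entry: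
  assumes "a < d" "b < d"
  shows "net_flow d (upd_entry f (a,b) x) v = net_flow d f v + (if v = a then x - f a b else 0) - (if v = b then x - f a b else 0)"
  unfolding net_flow_def using sum_upd_entry_row[OF assms(2)] sum_upd_entry_col[OF assms(1)] by simp

lemma net_flow_balancing_entry:
  assumes "e \<in> off_diag d" "v = fst e \<or> v = snd e"
  shows "net_flow d (upd_entry f e (balancing_entry d f v e)) v = 0"
proof -
  obtain a b where e: "e = (a,b)" "a < d" "b < d" "a \<noteq> b" using assms(1) unfolding off_diag_def by auto
  show ?thesis using assms(2) unfolding e(1) net_flow_upd_entry[OF e(2,3)] balancing_entry_def using e(4) by auto
qed

lemma net_flow_cong:
  assumes "\<And>s. s < d \<Longrightarrow> g v s = f v s" "\<And>s. s < d \<Longrightarrow> g s v = f s v"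
  shows "net_flow d g v = net_flow d f v"
  unfolding net_flow_def using assms by simp

lemma net_flow_diag_cong:
  assumes "\<And>r s. r \<noteq> s \<Longrightarrow> f r s = g r s"
  shows "net_flow d f v = net_flow d g v"
proof (cases "v < d")
  case True
  have "net_flow d f v = (f v v + (\<Sum>s\<in>{..<d} - {v}. f v s)) - (f v v + (\<Sum>s\<in>{..<d} - {v}. f s v))"
    unfolding net_flow_def using True by (simp add: sum.remove)
  also have "\<dots> = (\<Sum>s\<in>{..<d} - {v}. f v s) - (\<Sum>s\<in>{..<d} - {v}. f s v)" by simp
  also have "\<dots> = (\<Sum>s\<in>{..<d} - {v}. g v s) - (\<Sum>s\<in>{..<d} - {v}. g s v)"
    using assms by (simp add: eq_commute)
  also have "\<dots> = (g v v + (\<Sum>s\<in>{..<d} - {v}. g v s)) - (g v v + (\<Sum>s\<in>{..<d} - {v}. g s v))" by simp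
  also have "\<dots> = net_flow d g v" unfolding net_flow_def using True by (simp add: sum.remove)
  finally show ?thesis .
next
  case False
  then have "\<And>s. s < d \<Longrightarrow> s \<noteq> v" by auto
  then show ?thesis unfolding net_flow_def using assms by (simp add: eq_commute)
qed

lemma fill_tree_other: "(r, s) \<notin> snd ` set L \<Longrightarrow> fill_tree d f L r s = f r s"
proof (induction L arbitrary: f)
  case (Cons a L)
  obtain v e where a: "a = (v, e)" by (cases a)
  show ?case using Cons unfolding a by (auto simp: upd_entry_def)
qed simp

lemma attach_seq_edge_ends: "attach_seq X E L \<Longrightarrow> e \<in> snd ` set L \<Longrightarrow> fst e \<in> X \<union> fst ` set L \<and> snd e \<in> X \<union> fst ` set L"
proof (induction L)
  case (Cons a L)
  obtain v e' where a: "a = (v, e')" by (cases a)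
  show ?case using Cons unfolding a by auto
qed simp

lemma net_flow_fill_tree:
  assumes E: "E \<subseteq> off_diag d"
  shows "attach_seq X E L \<Longrightarrow> v \<in> fst ` set L \<Longrightarrow> net_flow d (fill_tree d f L) v = 0"
proof (induction L arbitrary: f)
  case (Cons a L)
  obtain u e where a: "a = (u, e)" by (cases a)
  have g: "attach_seq X E L" "u \<notin> X \<union> fst ` set L" "e \<in> E"
     "(fst e = u \<and> snd e \<in> X \<union> fst ` set L \<or> snd e = u \<and> fst e \<in> X \<union> fst ` set L)"
    using Cons.prems(1) unfolding a by auto
  define f1 where "f1 = upd_entry f e (balancing_entry d f u e)"
  show ?case
  proof (cases "v \<in> fst ` set L")
    case True then show ?thesis using Cons.IH[OF g(1)] unfolding a f1_def by simp
  next
    case False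
    then have vu: "v = u" using Cons.prems(2) a by auto
    have eo: "e \<in> off_diag d" using g(3) E by auto
    have b1: "net_flow d f1 u = 0" unfolding f1_def by (rule net_flow_balancing_entry[OF eo]) (use g(4) in auto)
    have "net_flow d (fill_tree d f1 L) u = net_flow d f1 u"
    proof (rule net_flow_cong)
      fix s
      have "(u, s) \<notin> snd ` set L" using attach_seq_edge_ends[OF g(1), of "(u,s)"] g(2) by auto
      then show "fill_tree d f1 L u s = f1 u s" by (rule fill_tree_other)
      have "(s, u) \<notin> snd ` set L" using attach_seq_edge_ends[OF g(1), of "(s,u)"] g(2) by auto
      then show "fill_tree d f1 L s u = f1 s u" by (rule fill_tree_other)
    qed
    then show ?thesis using b1 vu unfolding a f1_def by simp
  qed
qed simp

lemma net_flow_diff: "net_flow d (\<lambda>r s. f r s - M r s) v = net_flow d f v - net_flow d M v"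
  unfolding net_flow_def by (simp add: sum_subtractf)

lemma net_flow_scale: "net_flow d (\<lambda>r s. c * f r s) v = c * net_flow d f v"
  unfolding net_flow_def by (simp add: sum_distrib_left right_diff_distrib)

lemma fill_tree_diff_balanced:
  assumes M: "\<And>v. v < d \<Longrightarrow> net_flow d M v = 0" and E: "E \<subseteq> off_diag d"
  shows "attach_seq X E L \<Longrightarrow> fill_tree d (\<lambda>r s. f r s - M r s) L = (\<lambda>r s. fill_tree d f L r s - M r s)"
proof (induction L arbitrary: f)
  case (Cons a L)
  obtain u e where a: "a = (u, e)" by (cases a)
  have g: "attach_seq X E L" "e \<in> E" "fst e = u \<or> snd e = u" using Cons.prems unfolding a by auto
  have ud: "u < d" using g(2,3) E unfolding off_diag_def by auto
  have bb: "net_flow d (\<lambda>r s. f r s - M r s) u = net_flow d f u" using net_flow_diff M[OF ud] by simp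
  have "upd_entry (\<lambda>r s. f r s - M r s) e (balancing_entry d (\<lambda>r s. f r s - M r s) u e)
        = (\<lambda>r s. upd_entry f e (balancing_entry d f u e) r s - M r s)"
    unfolding upd_entry_def balancing_entry_def bb by (auto simp: fun_eq_iff)
  then show ?case using Cons.IH[OF g(1)] unfolding a by simp
qed simp

definition abs_mass :: "nat \<Rightarrow> (nat \<Rightarrow> nat \<Rightarrow> real) \<Rightarrow> real" where
  "abs_mass d f = (\<Sum>r<d. \<Sum>s<d. \<bar>f r s\<bar>)"

lemma abs_le_abs_mass: "r < d \<Longrightarrow> s < d \<Longrightarrow> \<bar>f r s\<bar> \<le> abs_mass d f"
proof -
  assume rs: "r < d" "s < d"
  have "\<bar>f r s\<bar> \<le> (\<Sum>s<d. \<bar>f r s\<bar>)" by (rule member_le_sum) (use rs in auto)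
  also have "\<dots> \<le> abs_mass d f" unfolding abs_mass_def
    by (rule member_le_sum[of r _ "\<lambda>r. \<Sum>s<d. \<bar>f r s\<bar>"]) (use rs in \<open>auto intro: sum_nonneg\<close>)
  finally show ?thesis .
qed

lemma abs_row_le_abs_mass: "r < d \<Longrightarrow> \<bar>\<Sum>s<d. f r s\<bar> \<le> abs_mass d f"
proof -
  assume r: "r < d"
  have "\<bar>\<Sum>s<d. f r s\<bar> \<le> (\<Sum>s<d. \<bar>f r s\<bar>)" by (rule sum_abs)
  also have "\<dots> \<le> abs_mass d f" unfolding abs_mass_def
    by (rule member_le_sum[of r _ "\<lambda>r. \<Sum>s<d. \<bar>f r s\<bar>"]) (use r in \<open>auto intro: sum_nonneg\<close>)
  finally show ?thesis .
qed

lemma abs_col_le_abs_mass: "v < d \<Longrightarrow> \<bar>\<Sum>s<d. f s v\<bar> \<le> abs_mass d f"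
proof -
  assume v: "v < d"
  have "\<bar>\<Sum>s<d. f s v\<bar> \<le> (\<Sum>s<d. \<bar>f s v\<bar>)" by (rule sum_abs)
  also have "\<dots> \<le> (\<Sum>s<d. \<Sum>t<d. \<bar>f s t\<bar>)"
    by (rule sum_mono) (rule member_le_sum, use v in auto)
  finally show ?thesis unfolding abs_mass_def .
qed

lemma abs_mass_upd_entry:
  assumes "fst e < d" "snd e < d"
  shows "abs_mass d (upd_entry f e x) \<le> abs_mass d f + \<bar>x\<bar>"
proof -
  have "abs_mass d (upd_entry f e x) \<le> (\<Sum>r<d. \<Sum>s<d. \<bar>f r s\<bar> + (if (r,s) = e then \<bar>x\<bar> else 0))"
    unfolding abs_mass_def upd_entry_def by (intro sum_mono) auto
  also have "\<dots> = abs_mass d f + (\<Sum>r<d. \<Sum>s<d. (if (r,s) = e then \<bar>x\<bar> else 0))"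
    unfolding abs_mass_def by (simp add: sum.distrib)
  also have "(\<Sum>r<d. \<Sum>s<d. (if (r,s) = e then \<bar>x\<bar> else 0)) = \<bar>x\<bar>"
  proof -
    obtain a b where e: "e = (a,b)" by (cases e)
    have "(\<Sum>r<d. \<Sum>s<d. (if (r,s) = e then \<bar>x\<bar> else 0)) = (\<Sum>r<d. if r = a then \<bar>x\<bar> else 0)"
      using assms unfolding e by (intro sum.cong refl) (auto simp: sum.delta')
    also have "\<dots> = \<bar>x\<bar>" using assms unfolding e by (simp add: sum.delta')
    finally show ?thesis .
  qed
  finally show ?thesis .
qed

lemma abs_mass_le_const:
  assumes "\<And>r s. r < d \<Longrightarrow> s < d \<Longrightarrow> \<bar>f r s\<bar> \<le> b"
  shows "abs_mass d f \<le> real (d * d) * b"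
proof -
  have "abs_mass d f \<le> (\<Sum>r<d. \<Sum>s<d. b)" unfolding abs_mass_def
    by (intro sum_mono) (use assms in auto)
  also have "\<dots> = real (d * d) * b" by simp
  finally show ?thesis .
qed

lemma abs_mass_fill_tree:
  assumes E: "E \<subseteq> off_diag d"
  shows "attach_seq X E L \<Longrightarrow> abs_mass d (fill_tree d f L) \<le> 4 ^ length L * abs_mass d f"
proof (induction L arbitrary: f)
  case (Cons a L)
  obtain u e where a: "a = (u, e)" by (cases a)
  have g: "attach_seq X E L" "e \<in> E" "fst e = u \<or> snd e = u" using Cons.prems unfolding a by auto
  have ed: "fst e < d" "snd e < d" using g(2) E unfolding off_diag_def by auto
  have ud: "u < d" using g(3) ed by auto
  have "\<bar>balancing_entry d f u e\<bar> \<le> \<bar>f (fst e) (snd e)\<bar> + \<bar>net_flow d f u\<bar>"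
    unfolding balancing_entry_def by auto
  also have "\<bar>net_flow d f u\<bar> \<le> 2 * abs_mass d f"
    unfolding net_flow_def using abs_row_le_abs_mass[OF ud, of f] abs_col_le_abs_mass[OF ud, of f] by linarith
  finally have "\<bar>balancing_entry d f u e\<bar> \<le> 3 * abs_mass d f" using abs_le_abs_mass[OF ed, of f] by linarith
  then have t1: "abs_mass d (upd_entry f e (balancing_entry d f u e)) \<le> 4 * abs_mass d f"
    using abs_mass_upd_entry[OF ed, of f "balancing_entry d f u e"] by linarith
  have "abs_mass d (fill_tree d f (a # L)) \<le> 4 ^ length L * abs_mass d (upd_entry f e (balancing_entry d f u e))"
    using Cons.IH[OF g(1)] unfolding a by simp
  also have "\<dots> \<le> 4 ^ length L * (4 * abs_mass d f)" using t1 by (intro mult_left_mono) auto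
  finally show ?case by (simp add: mult_ac)
qed simp

lemma abs_fill_tree_sub_le:
  assumes E: "E \<subseteq> off_diag d" and L: "attach_seq X E L"
    and M: "\<And>v. v < d \<Longrightarrow> net_flow d M v = 0"
    and f: "\<And>r s. r < d \<Longrightarrow> s < d \<Longrightarrow> \<bar>f r s - M r s\<bar> \<le> \<delta>"
    and rs: "r < d" "s < d"
  shows "\<bar>fill_tree d f L r s - M r s\<bar> \<le> 4 ^ length L * real (d * d) * \<delta>"
proof -
  have "\<bar>fill_tree d f L r s - M r s\<bar> \<le> abs_mass d (\<lambda>r s. fill_tree d f L r s - M r s)"
    by (rule abs_le_abs_mass[OF rs, of "\<lambda>r s. fill_tree d f L r s - M r s"])
  also have "\<dots> = abs_mass d (fill_tree d (\<lambda>r s. f r s - M r s) L)"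
    by (simp only: fill_tree_diff_balanced[OF M E L])
  also have "\<dots> \<le> 4 ^ length L * abs_mass d (\<lambda>r s. f r s - M r s)"
    by (rule abs_mass_fill_tree[OF E L])
  also have "\<dots> \<le> 4 ^ length L * (real (d * d) * \<delta>)"
    by (intro mult_left_mono abs_mass_le_const f) auto
  finally show ?thesis by (simp add: mult.assoc)
qed

lemma balancing_entry_Ints:
  assumes e: "e = (x, y)" "x < d" "y < d" "x \<noteq> y" and v: "v = x \<or> v = y"
    and f: "\<And>r s. r < d \<Longrightarrow> s < d \<Longrightarrow> r = v \<or> s = v \<Longrightarrow> (r, s) \<noteq> e \<Longrightarrow> f r s \<in> \<int>"
  shows "balancing_entry d f v e \<in> \<int>"
proof -
  have "v < d" using e v by auto
  then have "net_flow d (upd_entry f e 0) v \<in> \<int>"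
    unfolding net_flow_def upd_entry_def by (intro Ints_diff Ints_sum) (auto intro: f)
  moreover have "balancing_entry d f v e
      = (if v = x then - net_flow d (upd_entry f e 0) v else net_flow d (upd_entry f e 0) v)"
    using net_flow_upd_entry[OF e(2,3), of f 0 v] e v unfolding balancing_entry_def by auto
  ultimately show ?thesis by (cases "v = x") simp_all
qed

lemma fill_tree_Ints:
  assumes E: "E \<subseteq> off_diag d"
  shows "attach_seq X E L \<Longrightarrow> (\<And>r s. (r, s) \<notin> snd ` set L \<Longrightarrow> f r s \<in> \<int>) \<Longrightarrow> fill_tree d f L r s \<in> \<int>"
proof (induction L arbitrary: f)
  case Nil then show ?case by simp
next
  case (Cons a L)
  obtain u e where a: "a = (u, e)" by (cases a)
  have g: "attach_seq X E L" "u \<notin> X \<union> fst ` set L" "e \<in> E" "fst e = u \<or> snd e = u"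
    using Cons.prems(1) unfolding a by auto
  obtain x y where e: "e = (x, y)" "x < d" "y < d" "x \<noteq> y" using g(3) E unfolding off_diag_def by auto
  have notL: "(u, s) \<notin> snd ` set L" "(s, u) \<notin> snd ` set L" for s
    using attach_seq_edge_ends[OF g(1)] g(2) by force+
  have fI: "f r s \<in> \<int>" if "(r, s) \<notin> snd ` set L" "(r, s) \<noteq> e" for r s
    using Cons.prems(2)[of r s] that unfolding a by auto
  have sol: "balancing_entry d f u e \<in> \<int>"
    by (rule balancing_entry_Ints[OF e]) (use g(4) e(1) notL fI in auto)
  have "fill_tree d (upd_entry f e (balancing_entry d f u e)) L r s \<in> \<int>"
  proof (rule Cons.IH[OF g(1)])
    fix r' s' assume "(r', s') \<notin> snd ` set L"
    then show "upd_entry f e (balancing_entry d f u e) r' s' \<in> \<int>"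
      unfolding upd_entry_def using sol fI by auto
  qed
  then show ?case unfolding a by simp
qed

lemma net_flow_single_edge:
  assumes xy: "x < d" "y < d" "x \<noteq> y" and u: "u = x \<or> u = y"
    and zero: "\<And>r s. r < d \<Longrightarrow> s < d \<Longrightarrow> r = u \<or> s = u \<Longrightarrow> (r, s) \<noteq> (x, y) \<Longrightarrow> D r s = 0"
  shows "net_flow d D u = (if u = x then D x y else - D x y)"
proof -
  have "(\<Sum>s<d. D u s) = (\<Sum>s<d. if x = u \<and> s = y then D x y else 0)"
    using u xy by (intro sum.cong refl) (auto intro: zero)
  moreover have "(\<Sum>s<d. D s u) = (\<Sum>s<d. if y = u \<and> s = x then D x y else 0)"
    using u xy by (intro sum.cong refl) (auto intro: zero)
  ultimately show ?thesis using xy u unfolding net_flow_def by (auto simp: sum.delta')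
qed

lemma eq_0_on_tree_if_balanced:
  assumes E: "E \<subseteq> off_diag d"
  shows "attach_seq X E L \<Longrightarrow> (\<And>r s. r < d \<Longrightarrow> s < d \<Longrightarrow> (r,s) \<notin> snd ` set L \<Longrightarrow> D r s = 0)
     \<Longrightarrow> (\<And>v. v \<in> fst ` set L \<Longrightarrow> net_flow d D v = 0) \<Longrightarrow> e \<in> snd ` set L \<Longrightarrow> D (fst e) (snd e) = 0"
proof (induction L arbitrary: D)
  case (Cons a L)
  obtain u e0 where a: "a = (u, e0)" by (cases a)
  have g: "attach_seq X E L" "u \<notin> X \<union> fst ` set L" "e0 \<in> E"
     "(fst e0 = u \<and> snd e0 \<in> X \<union> fst ` set L \<or> snd e0 = u \<and> fst e0 \<in> X \<union> fst ` set L)"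
    using Cons.prems(1) unfolding a by auto
  obtain x y where e0: "e0 = (x,y)" "x < d" "y < d" "x \<noteq> y" using g(3) E unfolding off_diag_def by auto
  have notL: "\<And>s. (u, s) \<notin> snd ` set L" "\<And>s. (s, u) \<notin> snd ` set L"
    using attach_seq_edge_ends[OF g(1)] g(2) by force+
  have "net_flow d D u = (if u = x then D x y else - D x y)"
  proof (rule net_flow_single_edge[OF e0(2-4)])
    show "u = x \<or> u = y" using g(4) e0(1) by auto
    fix r s assume rs: "r < d" "s < d" "r = u \<or> s = u" "(r, s) \<noteq> (x, y)"
    then have "(r, s) \<notin> snd ` set ((u, e0) # L)" using notL e0(1) by auto
    then show "D r s = 0" using Cons.prems(2) rs a by auto
  qed
  moreover have "net_flow d D u = 0" using Cons.prems(3) a by simp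
  ultimately have De: "D x y = 0" by (simp split: if_splits)
  show ?case
  proof (cases "e = e0")
    case True then show ?thesis using De e0 by simp
  next
    case False
    then have eL: "e \<in> snd ` set L" using Cons.prems(4) a by auto
    show ?thesis
    proof (rule Cons.IH[OF g(1) _ _ eL])
      fix r s assume "r < d" "s < d" "(r, s) \<notin> snd ` set L"
      then show "D r s = 0" using Cons.prems(2)[of r s] De e0(1) a by (cases "(r,s) = e0") auto
    next
      fix v assume "v \<in> fst ` set L" then show "net_flow d D v = 0" using Cons.prems(3) a by auto
    qed
  qed
qed simp

lemma sum_net_flow_conn_class:
  assumes E: "E \<subseteq> off_diag d" and \<rho>: "\<rho> < d"
    and D: "\<And>r s. r < d \<Longrightarrow> s < d \<Longrightarrow> r \<noteq> s \<Longrightarrow> (r, s) \<notin> E \<Longrightarrow> D r s = 0"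
  shows "(\<Sum>v\<in>conn_rel d E `` {\<rho>}. net_flow d D v) = 0"
proof -
  have E': "E \<subseteq> {..<d} \<times> {..<d}" using E unfolding off_diag_def by auto
  define C where "C = conn_rel d E `` {\<rho>}"
  have eq: "equiv {..<d} (conn_rel d E)" by (rule equiv_conn_rel[OF E'])
  have Cd: "C \<subseteq> {..<d}" unfolding C_def using conn_rel_subset[OF E'] by auto
  have fC: "finite C" using Cd finite_subset by blast
  have tr: "trans (conn_rel d E)" using eq unfolding equiv_def by auto
  have Ecr: "\<And>a b. (a, b) \<in> E \<Longrightarrow> (a, b) \<in> conn_rel d E" "\<And>a b. (a, b) \<in> E \<Longrightarrow> (b, a) \<in> conn_rel d E"
    unfolding conn_rel_def by auto
  have inC: "s \<in> C" if "v \<in> C" "(v, s) \<in> conn_rel d E" for v s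
    using that tr unfolding C_def trans_def by blast
  have row: "(\<Sum>s<d. D v s) = (\<Sum>s\<in>C. D v s)" if v: "v \<in> C" for v
  proof (rule sum.mono_neutral_right)
    show "\<forall>s\<in>{..<d} - C. D v s = 0"
    proof
      fix s assume s: "s \<in> {..<d} - C"
      have "s \<noteq> v" using s v by auto
      moreover have "(v, s) \<notin> E" using inC[OF v] Ecr(1) s by blast
      ultimately show "D v s = 0" using D[of v s] s v Cd by auto
    qed
  qed (use Cd in auto)
  have col: "(\<Sum>s<d. D s v) = (\<Sum>s\<in>C. D s v)" if v: "v \<in> C" for v
  proof (rule sum.mono_neutral_right)
    show "\<forall>s\<in>{..<d} - C. D s v = 0"
    proof
      fix s assume s: "s \<in> {..<d} - C"
      have "s \<noteq> v" using s v by auto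
      moreover have "(s, v) \<notin> E" using inC[OF v] Ecr(2) s by blast
      ultimately show "D s v = 0" using D[of s v] s v Cd by auto
    qed
  qed (use Cd in auto)
  have "(\<Sum>v\<in>C. net_flow d D v) = (\<Sum>v\<in>C. \<Sum>s\<in>C. D v s) - (\<Sum>v\<in>C. \<Sum>s\<in>C. D s v)"
    unfolding net_flow_def by (simp add: row col sum_subtractf)
  also have "(\<Sum>v\<in>C. \<Sum>s\<in>C. D s v) = (\<Sum>v\<in>C. \<Sum>s\<in>C. D v s)" by (rule sum.swap)
  finally show ?thesis unfolding C_def by simp
qed

lemma net_flow_class_roots:
  assumes E: "E \<subseteq> off_diag d"
    and D: "\<And>r s. r < d \<Longrightarrow> s < d \<Longrightarrow> r \<noteq> s \<Longrightarrow> (r, s) \<notin> E \<Longrightarrow> D r s = 0"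
    and nr: "\<And>v. v < d \<Longrightarrow> v \<notin> class_roots d E \<Longrightarrow> net_flow d D v = 0"
    and v: "v < d"
  shows "net_flow d D v = 0"
proof (cases "v \<in> class_roots d E")
  case False then show ?thesis using nr v by simp
next
  case True
  have E': "E \<subseteq> {..<d} \<times> {..<d}" using E unfolding off_diag_def by auto
  define C where "C = conn_rel d E `` {v}"
  have eq: "equiv {..<d} (conn_rel d E)" by (rule equiv_conn_rel[OF E'])
  have vC: "v \<in> C" unfolding C_def using equiv_class_self[OF eq] v by simp
  have fC: "finite C" unfolding C_def by (rule finite_conn_class[OF E'])
  have others: "net_flow d D u = 0" if u: "u \<in> C - {v}" for u
  proof -
    have ud: "u < d" using u conn_rel_subset[OF E'] unfolding C_def by auto
    have "u \<notin> class_roots d E" using class_roots_eq[OF E' True _] u unfolding C_def by blast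
    then show ?thesis using nr ud by simp
  qed
  have "0 = (\<Sum>u\<in>C. net_flow d D u)" unfolding C_def by (rule sum_net_flow_conn_class[OF E v D, symmetric])
  also have "\<dots> = net_flow d D v + (\<Sum>u\<in>C - {v}. net_flow d D u)" using vC fC by (simp add: sum.remove)
  also have "(\<Sum>u\<in>C - {v}. net_flow d D u) = 0" using others by simp
  finally show ?thesis by simp
qed

lemma net_flow_fill_tree_spanning:
  assumes E: "E \<subseteq> off_diag d" and L: "attach_seq (class_roots d E) E L"
    and cover: "class_roots d E \<union> fst ` set L = {..<d}"
    and M: "\<And>v. v < d \<Longrightarrow> net_flow d M v = 0"
    and f: "\<And>r s. r < d \<Longrightarrow> s < d \<Longrightarrow> r \<noteq> s \<Longrightarrow> (r, s) \<notin> E \<Longrightarrow> f r s = M r s"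
    and v: "v < d"
  shows "net_flow d (fill_tree d f L) v = 0"
proof -
  define D where "D = fill_tree d (\<lambda>r s. f r s - M r s) L"
  have "net_flow d D v = 0"
  proof (rule net_flow_class_roots[OF E _ _ v])
    show "D r s = 0" if "r < d" "s < d" "r \<noteq> s" "(r, s) \<notin> E" for r s
    proof -
      have "(r, s) \<notin> snd ` set L" using attach_seq_edges[OF L] that(4) by blast
      then show ?thesis unfolding D_def using f[OF that] by (simp add: fill_tree_other)
    qed
    show "net_flow d D u = 0" if "u < d" "u \<notin> class_roots d E" for u
      unfolding D_def by (rule net_flow_fill_tree[OF E L]) (use cover that in auto)
  qed
  moreover have "D = (\<lambda>r s. fill_tree d f L r s - M r s)"
    unfolding D_def by (rule fill_tree_diff_balanced[OF M E L])
  ultimately show ?thesis using M[OF v] net_flow_diff[of d "fill_tree d f L" M v] by simp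
qed

lemma attach_seq_distinct_edges:
  assumes E: "E \<subseteq> off_diag d"
  shows "attach_seq X E L \<Longrightarrow> distinct (map snd L)"
proof (induction L)
  case (Cons a L)
  obtain v e where a: "a = (v, e)" by (cases a)
  have g: "attach_seq X E L" "v \<notin> X \<union> fst ` set L" "fst e = v \<or> snd e = v" using Cons.prems unfolding a by auto
  have "e \<notin> snd ` set L" using attach_seq_edge_ends[OF g(1), of e] g(2,3) by auto
  then show ?case using Cons.IH[OF g(1)] unfolding a by simp
qed simp

lemma graph_edges_off_diag: "graph_edges d w \<subseteq> off_diag d"
  unfolding graph_edges_def off_diag_def by auto

lemma attach_seq_vertices_less:
  assumes E: "E \<subseteq> off_diag d"
  shows "attach_seq X E L \<Longrightarrow> v \<in> fst ` set L \<Longrightarrow> v < d"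
proof (induction L)
  case (Cons a L)
  obtain u e where a: "a = (u, e)" by (cases a)
  have g: "attach_seq X E L" "e \<in> E" "fst e = u \<or> snd e = u" using Cons.prems(1) unfolding a by auto
  have "u < d" using g(2,3) E unfolding off_diag_def by auto
  then show ?case using Cons.IH[OF g(1)] Cons.prems(2) unfolding a by auto
qed simp

section \<open>Sums over boxes of arrays\<close>

definition entry_box :: "nat \<Rightarrow> (nat \<Rightarrow> nat \<Rightarrow> nat set) \<Rightarrow> (nat \<Rightarrow> nat \<Rightarrow> nat) set" where
  "entry_box d A = {\<nu>. (\<forall>r<d. \<forall>s<d. \<nu> r s \<in> A r s) \<and> (\<forall>r s. \<not> (r < d \<and> s < d) \<longrightarrow> \<nu> r s = 0)}"

definition prod_entries :: "nat \<Rightarrow> (nat \<Rightarrow> nat \<Rightarrow> real) \<Rightarrow> real" where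
  "prod_entries d h = (\<Prod>r<d. \<Prod>s<d. h r s)"

lemma bij_betw_entry_box:
  "bij_betw (\<lambda>f r s. if (r, s) \<in> {..<d} \<times> {..<d} then f (r, s) else 0)
     (Pi\<^sub>E ({..<d} \<times> {..<d}) (\<lambda>x. A (fst x) (snd x))) (entry_box d A)"
proof (rule bij_betw_byWitness[where f' = "\<lambda>\<nu>. restrict (\<lambda>x. \<nu> (fst x) (snd x)) ({..<d} \<times> {..<d})"])
  show "\<forall>f\<in>Pi\<^sub>E ({..<d} \<times> {..<d}) (\<lambda>x. A (fst x) (snd x)).
      restrict (\<lambda>x. (\<lambda>r s. if (r, s) \<in> {..<d} \<times> {..<d} then f (r, s) else 0) (fst x) (snd x))
        ({..<d} \<times> {..<d}) = f"
  proof
    fix f assume f: "f \<in> Pi\<^sub>E ({..<d} \<times> {..<d}) (\<lambda>x. A (fst x) (snd x))"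
    show "restrict (\<lambda>x. (\<lambda>r s. if (r, s) \<in> {..<d} \<times> {..<d} then f (r, s) else 0) (fst x) (snd x))
        ({..<d} \<times> {..<d}) = f"
    proof (rule ext)
      fix x show "restrict (\<lambda>x. (\<lambda>r s. if (r, s) \<in> {..<d} \<times> {..<d} then f (r, s) else 0) (fst x) (snd x))
        ({..<d} \<times> {..<d}) x = f x"
        using PiE_arb[OF f, of x] by (cases "x \<in> {..<d} \<times> {..<d}") simp_all
    qed
  qed
  show "\<forall>a'\<in>entry_box d A. (\<lambda>r s. if (r, s) \<in> {..<d} \<times> {..<d} then restrict (\<lambda>x. a' (fst x) (snd x)) ({..<d} \<times> {..<d}) (r, s) else 0) = a'"
  proof
    fix a' assume a': "a' \<in> entry_box d A"
    show "(\<lambda>r s. if (r, s) \<in> {..<d} \<times> {..<d} then restrict (\<lambda>x. a' (fst x) (snd x)) ({..<d} \<times> {..<d}) (r, s) else 0) = a'"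
    proof (intro ext)
      fix r s show "(if (r, s) \<in> {..<d} \<times> {..<d} then restrict (\<lambda>x. a' (fst x) (snd x)) ({..<d} \<times> {..<d}) (r, s) else 0) = a' r s"
        using a' unfolding entry_box_def by (cases "r < d \<and> s < d") auto
    qed
  qed
  show "(\<lambda>f r s. if (r, s) \<in> {..<d} \<times> {..<d} then f (r, s) else 0) ` Pi\<^sub>E ({..<d} \<times> {..<d}) (\<lambda>x. A (fst x) (snd x)) \<subseteq> entry_box d A"
  proof
    fix y assume "y \<in> (\<lambda>f r s. if (r, s) \<in> {..<d} \<times> {..<d} then f (r, s) else 0) ` Pi\<^sub>E ({..<d} \<times> {..<d}) (\<lambda>x. A (fst x) (snd x))"
    then obtain f where f: "f \<in> Pi\<^sub>E ({..<d} \<times> {..<d}) (\<lambda>x. A (fst x) (snd x))"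
      and y: "y = (\<lambda>r s. if (r, s) \<in> {..<d} \<times> {..<d} then f (r, s) else 0)" by blast
    have "\<And>r s. r < d \<Longrightarrow> s < d \<Longrightarrow> f (r, s) \<in> A r s"
    proof -
      fix r s assume "r < d" "s < d"
      then have "(r, s) \<in> {..<d} \<times> {..<d}" by simp
      from PiE_mem[OF f this] show "f (r, s) \<in> A r s" by simp
    qed
    then show "y \<in> entry_box d A" unfolding entry_box_def y by simp
  qed
  show "(\<lambda>\<nu>. restrict (\<lambda>x. \<nu> (fst x) (snd x)) ({..<d} \<times> {..<d})) ` entry_box d A \<subseteq> Pi\<^sub>E ({..<d} \<times> {..<d}) (\<lambda>x. A (fst x) (snd x))"
  proof
    fix y assume "y \<in> (\<lambda>\<nu>. restrict (\<lambda>x. \<nu> (fst x) (snd x)) ({..<d} \<times> {..<d})) ` entry_box d A"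
    then obtain \<nu> where nu: "\<nu> \<in> entry_box d A" and y: "y = restrict (\<lambda>x. \<nu> (fst x) (snd x)) ({..<d} \<times> {..<d})" by blast
    show "y \<in> Pi\<^sub>E ({..<d} \<times> {..<d}) (\<lambda>x. A (fst x) (snd x))"
      unfolding y using nu unfolding entry_box_def by (intro restrict_PiE_iff[THEN iffD2]) auto
  qed
qed

lemma finite_entry_box: "(\<And>r s. r < d \<Longrightarrow> s < d \<Longrightarrow> finite (A r s)) \<Longrightarrow> finite (entry_box d A)"
proof -
  assume fin: "\<And>r s. r < d \<Longrightarrow> s < d \<Longrightarrow> finite (A r s)"
  have "finite (Pi\<^sub>E ({..<d} \<times> {..<d}) (\<lambda>x. A (fst x) (snd x)))"
  proof (rule finite_PiE)
    fix x assume "x \<in> {..<d} \<times> {..<d}" then show "finite (A (fst x) (snd x))" using fin by auto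
  qed simp
  then show ?thesis using bij_betw_finite[OF bij_betw_entry_box[of d A]] by simp
qed

lemma sum_entry_box:
  assumes fin: "\<And>r s. r < d \<Longrightarrow> s < d \<Longrightarrow> finite (A r s)"
  shows "(\<Sum>\<nu>\<in>entry_box d A. prod_entries d (\<lambda>r s. g r s (\<nu> r s))) = prod_entries d (\<lambda>r s. \<Sum>j\<in>A r s. g r s j)"
proof -
  define I where "I = {..<d} \<times> {..<d}"
  define \<phi> where "\<phi> = (\<lambda>f r s. if (r, s) \<in> {..<d} \<times> {..<d} then f (r, s) else (0::nat))"
  have pp: "prod_entries d h = (\<Prod>x\<in>I. h (fst x) (snd x))" for h
    unfolding prod_entries_def I_def prod.cartesian_product by (simp add: case_prod_beta')
  have "prod_entries d (\<lambda>r s. \<Sum>j\<in>A r s. g r s j) = (\<Prod>x\<in>I. \<Sum>j\<in>A (fst x) (snd x). g (fst x) (snd x) j)"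
    by (rule pp)
  also have "\<dots> = (\<Sum>f\<in>Pi\<^sub>E I (\<lambda>x. A (fst x) (snd x)). \<Prod>x\<in>I. g (fst x) (snd x) (f x))"
    by (rule prod_sum_PiE) (use fin in \<open>auto simp: I_def\<close>)
  also have "\<dots> = (\<Sum>f\<in>Pi\<^sub>E I (\<lambda>x. A (fst x) (snd x)). prod_entries d (\<lambda>r s. g r s (\<phi> f r s)))"
  proof (rule sum.cong[OF refl])
    fix f assume "f \<in> Pi\<^sub>E I (\<lambda>x. A (fst x) (snd x))"
    have "(\<Prod>x\<in>I. g (fst x) (snd x) (f x)) = (\<Prod>x\<in>I. g (fst x) (snd x) (\<phi> f (fst x) (snd x)))"
    proof (rule prod.cong[OF refl])
      fix x assume "x \<in> I"
      then have "\<phi> f (fst x) (snd x) = f x" unfolding \<phi>_def I_def by (cases x) simp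
      then show "g (fst x) (snd x) (f x) = g (fst x) (snd x) (\<phi> f (fst x) (snd x))" by simp
    qed
    also have "\<dots> = prod_entries d (\<lambda>r s. g r s (\<phi> f r s))" by (rule pp[symmetric])
    finally show "(\<Prod>x\<in>I. g (fst x) (snd x) (f x)) = prod_entries d (\<lambda>r s. g r s (\<phi> f r s))" .
  qed
  also have "\<dots> = (\<Sum>\<nu>\<in>entry_box d A. prod_entries d (\<lambda>r s. g r s (\<nu> r s)))"
    unfolding I_def \<phi>_def by (rule sum.reindex_bij_betw[OF bij_betw_entry_box])
  finally show ?thesis by simp
qed

lemma card_entry_box:
  assumes fin: "\<And>r s. r < d \<Longrightarrow> s < d \<Longrightarrow> finite (A r s)"
  shows "real (card (entry_box d A)) = prod_entries d (\<lambda>r s. real (card (A r s)))"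
proof -
  have "real (card (entry_box d A)) = (\<Sum>\<nu>\<in>entry_box d A. prod_entries d (\<lambda>r s. (\<lambda>r s j. 1::real) r s (\<nu> r s)))"
    by (simp add: prod_entries_def)
  also have "\<dots> = prod_entries d (\<lambda>r s. \<Sum>j\<in>A r s. (\<lambda>r s j. 1::real) r s j)" by (rule sum_entry_box[OF fin])
  also have "\<dots> = prod_entries d (\<lambda>r s. real (card (A r s)))" by simp
  finally show ?thesis .
qed

lemma prod_entries_mono:
  assumes "\<And>r s. r < d \<Longrightarrow> s < d \<Longrightarrow> 0 \<le> f r s" "\<And>r s. r < d \<Longrightarrow> s < d \<Longrightarrow> f r s \<le> g r s"
  shows "prod_entries d f \<le> prod_entries d g"
  unfolding prod_entries_def using assms by (intro prod_mono conjI prod_nonneg) auto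

lemma prod_entries_nonneg: "(\<And>r s. r < d \<Longrightarrow> s < d \<Longrightarrow> 0 \<le> f r s) \<Longrightarrow> 0 \<le> prod_entries d f"
  unfolding prod_entries_def by (intro prod_nonneg) auto

lemma prod_entries_mult: "prod_entries d (\<lambda>r s. f r s * g r s) = prod_entries d f * prod_entries d g"
  unfolding prod_entries_def by (simp add: prod.distrib)

lemma prod_entries_exp: "prod_entries d (\<lambda>r s. exp (f r s)) = exp (\<Sum>r<d. \<Sum>s<d. f r s)"
  unfolding prod_entries_def by (simp add: exp_sum)

lemma prod_entries_indicator:
  assumes T: "T \<subseteq> {..<d} \<times> {..<d}"
  shows "prod_entries d (\<lambda>r s. if (r, s) \<in> T then f r s else 1) = (\<Prod>x\<in>T. f (fst x) (snd x))"
proof -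
  have "prod_entries d (\<lambda>r s. if (r, s) \<in> T then f r s else 1) = (\<Prod>x\<in>{..<d} \<times> {..<d}. if x \<in> T then f (fst x) (snd x) else 1)"
    unfolding prod_entries_def prod.cartesian_product by (simp add: case_prod_beta')
  also have "\<dots> = (\<Prod>x\<in>T. if x \<in> T then f (fst x) (snd x) else 1)"
    by (rule prod.mono_neutral_right) (use T in auto)
  also have "\<dots> = (\<Prod>x\<in>T. f (fst x) (snd x))" by (rule prod.cong) auto
  finally show ?thesis .
qed

lemma prod_entries_const: "prod_entries d (\<lambda>r s. c) = c ^ (d * d)"
  unfolding prod_entries_def by (simp add: power_mult)

definition flow_arrays :: "nat \<Rightarrow> (nat \<Rightarrow> nat \<Rightarrow> nat) \<Rightarrow> (nat \<Rightarrow> nat \<Rightarrow> nat) set" where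
  "flow_arrays d \<mu> = {\<nu>. (\<forall>r<d. \<forall>s<d. \<nu> r s \<le> \<mu> r s) \<and> (\<forall>r s. \<not> (r < d \<and> s < d) \<longrightarrow> \<nu> r s = 0)
                       \<and> in_F d (\<lambda>r s. real (\<nu> r s))}"

lemma q_eq_sum_flow_arrays: "q d a \<mu> = (\<Sum>\<nu>\<in>flow_arrays d \<mu>. prod_entries d (\<lambda>r s. binom_prob a (\<mu> r s) (\<nu> r s)))"
  unfolding q_def flow_arrays_def prod_entries_def binom_prob_def by simp

lemma flow_arrays_subset_entry_box: "flow_arrays d \<mu> \<subseteq> entry_box d (\<lambda>r s. {..\<mu> r s})"
  unfolding flow_arrays_def entry_box_def by auto

lemma finite_flow_arrays: "finite (flow_arrays d \<mu>)"
  by (rule finite_subset[OF flow_arrays_subset_entry_box finite_entry_box]) simp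

lemma q_pos:
  assumes a: "0 < \<alpha>" "\<alpha> < 1"
  shows "0 < q d \<alpha> \<mu>"
proof -
  define z :: "nat \<Rightarrow> nat \<Rightarrow> nat" where "z = (\<lambda>r s. 0)"
  have zQ: "z \<in> flow_arrays d \<mu>" unfolding flow_arrays_def z_def in_F_def by simp
  have "0 < prod_entries d (\<lambda>r s. binom_prob \<alpha> (\<mu> r s) (z r s))"
    unfolding prod_entries_def z_def binom_prob_def using a by (auto intro!: prod_pos)
  also have "\<dots> \<le> (\<Sum>\<nu>\<in>flow_arrays d \<mu>. prod_entries d (\<lambda>r s. binom_prob \<alpha> (\<mu> r s) (\<nu> r s)))"
    by (rule member_le_sum[OF zQ _ finite_flow_arrays]) (use a in \<open>auto intro!: prod_entries_nonneg binom_prob_nonneg\<close>)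
  also have "\<dots> = q d \<alpha> \<mu>" by (rule q_eq_sum_flow_arrays[symmetric])
  finally show ?thesis .
qed

lemma real_scale_int:
  assumes "n \<in> admissible d w" "r < d" "s < d" "0 \<le> w r s"
  shows "real (scale_int n w r s) = real n * w r s"
proof -
  have "real n * w r s \<in> \<int>" using assms(1-3) unfolding admissible_def by auto
  then obtain k where k: "real n * w r s = of_int k" by (rule Ints_cases)
  have "0 \<le> real n * w r s" using assms(4) by simp
  then have "0 \<le> k" using k by simp
  then show ?thesis unfolding scale_int_def k by simp
qed

lemma flow_arrays_determined_off_tree:
  assumes E: "E \<subseteq> off_diag d" and L: "attach_seq X E L"
    and nu: "\<nu> \<in> flow_arrays d \<mu>" "\<nu>' \<in> flow_arrays d \<mu>"
    and eq: "\<And>r s. r < d \<Longrightarrow> s < d \<Longrightarrow> (r, s) \<notin> snd ` set L \<Longrightarrow> \<nu> r s = \<nu>' r s"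
  shows "\<nu> = \<nu>'"
proof -
  define D where "D = (\<lambda>r s. real (\<nu> r s) - real (\<nu>' r s))"
  have D0: "D r s = 0" if "r < d" "s < d" "(r, s) \<notin> snd ` set L" for r s
    using eq[OF that] unfolding D_def by simp
  have b: "net_flow d D v = 0" if "v \<in> fst ` set L" for v
  proof -
    have "net_flow d D v = net_flow d (\<lambda>r s. real (\<nu> r s)) v - net_flow d (\<lambda>r s. real (\<nu>' r s)) v"
      unfolding D_def by (rule net_flow_diff)
    moreover have "v < d" by (rule attach_seq_vertices_less[OF E L that])
    ultimately show ?thesis using nu unfolding flow_arrays_def in_F_iff_net_flow by auto
  qed
  show ?thesis
  proof (intro ext)
    fix r s
    show "\<nu> r s = \<nu>' r s"
    proof (cases "r < d \<and> s < d")
      case False then show ?thesis using nu unfolding flow_arrays_def by auto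
    next
      case True
      show ?thesis
      proof (cases "(r, s) \<in> snd ` set L")
        case False then show ?thesis using eq True by simp
      next
        case inT: True
        have "D (fst (r,s)) (snd (r,s)) = 0" by (rule eq_0_on_tree_if_balanced[OF E L D0 b inT]) auto
        then show ?thesis unfolding D_def by simp
      qed
    qed
  qed
qed

lemma sum_prod_entries_subset_box_le_one:
  assumes fin: "\<And>r s. r < d \<Longrightarrow> s < d \<Longrightarrow> finite (A r s)" and Q: "Q \<subseteq> entry_box d A"
    and nonneg: "\<And>r s j. 0 \<le> g r s j" and le1: "\<And>r s. r < d \<Longrightarrow> s < d \<Longrightarrow> (\<Sum>j\<in>A r s. g r s j) \<le> 1"
  shows "(\<Sum>\<eta>\<in>Q. prod_entries d (\<lambda>r s. g r s (\<eta> r s))) \<le> 1"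
proof -
  have "(\<Sum>\<eta>\<in>Q. prod_entries d (\<lambda>r s. g r s (\<eta> r s))) \<le> (\<Sum>\<eta>\<in>entry_box d A. prod_entries d (\<lambda>r s. g r s (\<eta> r s)))"
    by (rule sum_mono2[OF finite_entry_box[OF fin] Q]) (auto intro!: prod_entries_nonneg nonneg)
  also have "\<dots> = prod_entries d (\<lambda>r s. \<Sum>j\<in>A r s. g r s j)" by (rule sum_entry_box[OF fin])
  also have "\<dots> \<le> prod_entries d (\<lambda>r s. 1)"
    by (rule prod_entries_mono) (auto intro: sum_nonneg nonneg le1)
  finally show ?thesis by (simp add: prod_entries_def)
qed

lemma sum_prod_entries_le_if_determined:
  fixes g :: "nat \<Rightarrow> nat \<Rightarrow> nat \<Rightarrow> real"
  assumes P: "P \<subseteq> entry_box d (\<lambda>r s. {..\<mu> r s})" and T: "T \<subseteq> {..<d} \<times> {..<d}"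
    and inj: "\<And>\<nu> \<nu>'. \<nu> \<in> P \<Longrightarrow> \<nu>' \<in> P \<Longrightarrow> (\<And>r s. r < d \<Longrightarrow> s < d \<Longrightarrow> (r, s) \<notin> T \<Longrightarrow> \<nu> r s = \<nu>' r s) \<Longrightarrow> \<nu> = \<nu>'"
    and g0: "\<And>r s j. 0 \<le> g r s j"
    and g1: "\<And>r s. r < d \<Longrightarrow> s < d \<Longrightarrow> (r, s) \<notin> T \<Longrightarrow> (\<Sum>j\<le>\<mu> r s. g r s j) \<le> 1"
    and Mx: "\<And>r s j. (r, s) \<in> T \<Longrightarrow> g r s j \<le> Mx r s"
  shows "(\<Sum>\<nu>\<in>P. prod_entries d (\<lambda>r s. g r s (\<nu> r s))) \<le> (\<Prod>x\<in>T. Mx (fst x) (snd x))"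
proof -
  define g' where "g' = (\<lambda>r s j. if (r, s) \<in> T then 1 else g r s j)"
  define Mx' where "Mx' = (\<lambda>r s. if (r, s) \<in> T then Mx r s else 1)"
  define z where "z = (\<lambda>(\<nu>::nat\<Rightarrow>nat\<Rightarrow>nat) r s. if (r, s) \<in> T then 0 else \<nu> r s)"
  define A' where "A' = (\<lambda>r s. if (r, s) \<in> T then {0} else {..\<mu> r s})"
  have Mx0: "0 \<le> Mx r s" if "(r, s) \<in> T" for r s using Mx[OF that, of 0] g0[of r s 0] by linarith
  have finP: "finite P" by (rule finite_subset[OF P finite_entry_box]) simp
  have t1: "prod_entries d (\<lambda>r s. g r s (\<nu> r s)) \<le> prod_entries d (\<lambda>r s. g' r s (z \<nu> r s)) * prod_entries d Mx'" for \<nu>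
  proof -
    have "prod_entries d (\<lambda>r s. g r s (\<nu> r s)) \<le> prod_entries d (\<lambda>r s. g' r s (z \<nu> r s) * Mx' r s)"
    proof (rule prod_entries_mono)
      fix r s show "0 \<le> g r s (\<nu> r s)" by (rule g0)
      show "g r s (\<nu> r s) \<le> g' r s (z \<nu> r s) * Mx' r s"
        unfolding g'_def Mx'_def z_def using Mx[of r s "\<nu> r s"] by auto
    qed
    then show ?thesis by (simp add: prod_entries_mult)
  qed
  have PPMx: "prod_entries d Mx' = (\<Prod>x\<in>T. Mx (fst x) (snd x))"
  proof -
    have "prod_entries d Mx' = (\<Prod>x\<in>{..<d} \<times> {..<d}. Mx' (fst x) (snd x))"
      unfolding prod_entries_def prod.cartesian_product by (simp add: case_prod_beta')
    also have "\<dots> = (\<Prod>x\<in>T. Mx' (fst x) (snd x))"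
      by (rule prod.mono_neutral_right) (use T in \<open>auto simp: Mx'_def\<close>)
    also have "\<dots> = (\<Prod>x\<in>T. Mx (fst x) (snd x))"
      by (rule prod.cong) (auto simp: Mx'_def)
    finally show ?thesis .
  qed
  have PPMx0: "0 \<le> prod_entries d Mx'" unfolding prod_entries_def Mx'_def using Mx0 by (intro prod_nonneg) auto
  have injz: "inj_on z P"
  proof
    fix \<nu> \<nu>' assume nn: "\<nu> \<in> P" "\<nu>' \<in> P" "z \<nu> = z \<nu>'"
    show "\<nu> = \<nu>'"
    proof (rule inj[OF nn(1,2)])
      fix r s assume "r < d" "s < d" "(r, s) \<notin> T"
      then show "\<nu> r s = \<nu>' r s" using fun_cong[OF fun_cong[OF nn(3), of r], of s] unfolding z_def by simp
    qed
  qed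
  have zP: "z ` P \<subseteq> entry_box d A'"
  proof
    fix y assume "y \<in> z ` P"
    then obtain \<nu> where nu: "\<nu> \<in> P" "y = z \<nu>" by blast
    have "\<nu> \<in> entry_box d (\<lambda>r s. {..\<mu> r s})" using nu P by auto
    then show "y \<in> entry_box d A'" unfolding nu(2) entry_box_def A'_def z_def using T by auto
  qed
  have fA: "finite (A' r s)" for r s unfolding A'_def by auto
  have "(\<Sum>\<nu>\<in>P. prod_entries d (\<lambda>r s. g r s (\<nu> r s))) \<le> (\<Sum>\<nu>\<in>P. prod_entries d (\<lambda>r s. g' r s (z \<nu> r s)) * prod_entries d Mx')"
    by (rule sum_mono) (rule t1)
  also have "\<dots> = prod_entries d Mx' * (\<Sum>\<nu>\<in>P. prod_entries d (\<lambda>r s. g' r s (z \<nu> r s)))"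
    by (simp add: sum_distrib_left mult_ac)
  also have "(\<Sum>\<nu>\<in>P. prod_entries d (\<lambda>r s. g' r s (z \<nu> r s))) = (\<Sum>\<eta>\<in>z ` P. prod_entries d (\<lambda>r s. g' r s (\<eta> r s)))"
    by (rule sum.reindex[OF injz, symmetric, unfolded comp_def])
  also have "\<dots> \<le> 1"
    by (rule sum_prod_entries_subset_box_le_one[OF fA zP])
       (use g1 in \<open>auto simp: g'_def g0 A'_def atMost_atLeast0\<close>)
  finally have "(\<Sum>\<nu>\<in>P. prod_entries d (\<lambda>r s. g r s (\<nu> r s))) \<le> prod_entries d Mx' * 1"
    using PPMx0 by (simp add: mult_left_mono)
  then show ?thesis using PPMx by simp
qed

section \<open>The polynomial upper bound\<close>

lemma q_le_prod_forest_bound: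
  assumes \<alpha>: "0 < \<alpha>" "\<alpha> < 1" and E: "E \<subseteq> off_diag d" and L: "attach_seq X E L"
    and bound: "\<And>r s j. (r, s) \<in> snd ` set L \<Longrightarrow> binom_prob \<alpha> (\<mu> r s) j \<le> Mx r s"
  shows "q d \<alpha> \<mu> \<le> (\<Prod>x\<in>snd ` set L. Mx (fst x) (snd x))"
  unfolding q_eq_sum_flow_arrays
proof (rule sum_prod_entries_le_if_determined[OF flow_arrays_subset_entry_box])
  show "snd ` set L \<subseteq> {..<d} \<times> {..<d}" using attach_seq_edges[OF L] E unfolding off_diag_def by auto
  show "\<nu> = \<nu>'" if "\<nu> \<in> flow_arrays d \<mu>" "\<nu>' \<in> flow_arrays d \<mu>"
     "\<And>r s. r < d \<Longrightarrow> s < d \<Longrightarrow> (r, s) \<notin> snd ` set L \<Longrightarrow> \<nu> r s = \<nu>' r s" for \<nu> \<nu>'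
    by (rule flow_arrays_determined_off_tree[OF E L that])
  show "0 \<le> binom_prob \<alpha> (\<mu> r s) j" for r s j using \<alpha> by (auto intro: binom_prob_nonneg)
  show "(\<Sum>j\<le>\<mu> r s. binom_prob \<alpha> (\<mu> r s) j) \<le> 1" for r s by (simp add: sum_binom_prob)
qed (rule bound)

theorem q_upper_poly:
  assumes \<alpha>: "0 < \<alpha>" "\<alpha> < 1" and w: "\<forall>r<d. \<forall>s<d. 0 \<le> w r s \<and> w r s \<le> 1"
    and L: "attach_seq X (graph_edges d w) L"
  shows "\<exists>C N. \<forall>n\<ge>N. n \<in> admissible d w \<longrightarrow> q d \<alpha> (scale_int n w) \<le> C / sqrt n ^ length L"
proof -
  define T where "T = snd ` set L"
  have T: "0 < w r s" "r < d" "s < d" if "(r, s) \<in> T" for r s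
    using attach_seq_edges[OF L] that unfolding T_def graph_edges_def by auto
  have card_T: "card T = length L"
    unfolding T_def using distinct_card[OF attach_seq_distinct_edges[OF graph_edges_off_diag L]] by simp
  obtain C m0 where C: "\<And>m j. m \<ge> m0 \<Longrightarrow> binom_prob \<alpha> m j \<le> C / sqrt m"
    using binom_prob_local_upper[OF \<alpha>] by blast
  define N where "N = Max (insert 0 ((\<lambda>e. nat \<lceil>real m0 / w (fst e) (snd e)\<rceil>) ` T))"
  show ?thesis
  proof (intro exI allI impI)
    fix n assume n: "N \<le> n" "n \<in> admissible d w"
    have bound: "binom_prob \<alpha> (scale_int n w r s) j \<le> C / sqrt (w r s) / sqrt n"
      if rs: "(r, s) \<in> T" for r s j
    proof -
      have "nat \<lceil>real m0 / w r s\<rceil> \<in> insert 0 ((\<lambda>e. nat \<lceil>real m0 / w (fst e) (snd e)\<rceil>) ` T)"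
        using rs by (auto intro: rev_image_eqI)
      then have "nat \<lceil>real m0 / w r s\<rceil> \<le> N" unfolding N_def by (rule Max_ge[rotated]) (simp add: T_def)
      then have "real m0 / w r s \<le> real n" using n(1) by linarith
      then have "real m0 \<le> real n * w r s" using T[OF rs] by (simp add: field_simps)
      moreover have \<mu>: "real (scale_int n w r s) = real n * w r s"
        using real_scale_int[OF n(2)] T[OF rs] w by auto
      ultimately have "m0 \<le> scale_int n w r s" by linarith
      then have "binom_prob \<alpha> (scale_int n w r s) j \<le> C / sqrt (real n * w r s)" using C \<mu> by metis
      then show ?thesis by (simp add: real_sqrt_mult divide_divide_eq_left mult.commute)
    qed
    have "q d \<alpha> (scale_int n w) \<le> (\<Prod>x\<in>T. C / sqrt (w (fst x) (snd x)) / sqrt n)"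
      unfolding T_def by (rule q_le_prod_forest_bound[OF \<alpha> graph_edges_off_diag L]) (use bound T_def in auto)
    also have "\<dots> = (\<Prod>x\<in>T. C / sqrt (w (fst x) (snd x))) / (\<Prod>x\<in>T. sqrt n)"
      by (rule prod_dividef)
    also have "(\<Prod>x\<in>T. sqrt n) = sqrt n ^ length L" using card_T by simp
    finally show "q d \<alpha> (scale_int n w) \<le> (\<Prod>x\<in>T. C / sqrt (w (fst x) (snd x))) / sqrt n ^ length L" .
  qed
qed

section \<open>The lower bound\<close>

definition free_entries :: "nat \<Rightarrow> (nat \<Rightarrow> nat \<Rightarrow> real) \<Rightarrow> (nat \<Rightarrow> nat \<Rightarrow> real) \<Rightarrow> (nat \<times> nat) set" where
  "free_entries d w p = {(r,s). r < d \<and> s < d \<and> 0 < w r s \<and> 0 < p r s \<and> p r s < 1}"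

definition free_edges :: "nat \<Rightarrow> (nat \<Rightarrow> nat \<Rightarrow> real) \<Rightarrow> (nat \<Rightarrow> nat \<Rightarrow> real) \<Rightarrow> (nat \<times> nat) set" where
  "free_edges d w p = free_entries d w p \<inter> off_diag d"

text \<open>The lower bound at a fixed \<open>n\<close>, with the binomials tilted from \<open>\<alpha>\<close> to the means \<open>p\<close>:
  \<open>\<mu> = n w\<close> are the trial counts, \<open>M = n w p\<close> the tilted means, \<open>E\<close> the free edges (where
  \<open>0 < p < 1\<close>) and \<open>T\<close> a spanning forest of \<open>E\<close>.\<close>

locale tilted_window_setting =
  fixes d :: nat and \<alpha> :: real and w p :: "nat \<Rightarrow> nat \<Rightarrow> real" and n :: nat and B :: real
    and L :: "(nat \<times> (nat \<times> nat)) list" and cl :: "nat \<times> nat \<Rightarrow> real"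
    and \<mu> :: "nat \<Rightarrow> nat \<Rightarrow> nat" and M :: "nat \<Rightarrow> nat \<Rightarrow> real" and E T :: "(nat \<times> nat) set"
  assumes \<mu>_def: "\<mu> = scale_int n w"
    and M_def: "M = (\<lambda>r s. real n * w r s * p r s)"
    and E_def: "E = free_edges d w p"
    and T_def: "T = snd ` set L"
    and \<alpha>: "0 < \<alpha>" "\<alpha> < 1"
    and w: "\<forall>r<d. \<forall>s<d. 0 \<le> w r s \<and> w r s \<le> 1"
    and p: "\<forall>r<d. \<forall>s<d. 0 \<le> p r s \<and> p r s \<le> 1"
    and mean: "in_F d (\<lambda>r s. w r s * p r s)"
    and n: "n \<in> admissible d w" "0 < n"
    and L: "attach_seq (class_roots d E) E L" and cover: "class_roots d E \<union> fst ` set L = {..<d}"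
    and B: "4 ^ length L * real (d * d) \<le> B" "1 \<le> B"
    and tree_range: "\<And>r s. (r, s) \<in> T \<Longrightarrow> B * sqrt n \<le> M r s \<and> M r s + B * sqrt n \<le> real (\<mu> r s)"
    and tree_lower: "\<And>r s j. (r, s) \<in> T \<Longrightarrow> j \<le> \<mu> r s \<Longrightarrow> \<bar>real j - M r s\<bar> \<le> B * sqrt n
                       \<Longrightarrow> cl (r, s) / sqrt n \<le> binom_prob (p r s) (\<mu> r s) j"
    and cl_nonneg: "\<And>x. x \<in> T \<Longrightarrow> 0 \<le> cl x"
begin

lemma E_off_diag: "E \<subseteq> off_diag d"
  unfolding E_def free_edges_def by auto

lemma T_free: "(r, s) \<in> T \<Longrightarrow> (r, s) \<in> free_entries d w p"
  using attach_seq_edges[OF L] unfolding T_def E_def free_edges_def by auto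

lemma T_less: "(r, s) \<in> T \<Longrightarrow> r < d \<and> s < d"
  using T_free unfolding free_entries_def by auto

lemma real_\<mu>: "r < d \<Longrightarrow> s < d \<Longrightarrow> real (\<mu> r s) = real n * w r s"
  unfolding \<mu>_def using real_scale_int[OF n(1)] w by auto

lemma sqrt_\<mu>_le: "r < d \<Longrightarrow> s < d \<Longrightarrow> sqrt (real (\<mu> r s)) \<le> sqrt n"
  using real_\<mu>[of r s] w by (simp add: mult_left_le)

lemma sqrt_n_le: "sqrt n \<le> B * sqrt n"
  using mult_right_mono[OF B(2), of "sqrt n"] by simp

lemma M_eq: "r < d \<Longrightarrow> s < d \<Longrightarrow> M r s = real (\<mu> r s) * p r s"
  using real_\<mu> unfolding M_def by simp

lemma M_balanced: "v < d \<Longrightarrow> net_flow d M v = 0"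
  using mean net_flow_scale[of d "real n" "\<lambda>r s. w r s * p r s" v]
  unfolding M_def in_F_iff_net_flow by (simp add: mult.assoc)

lemma nonfree_entry:
  assumes "r < d" "s < d" "(r, s) \<notin> free_entries d w p"
  shows "p r s = 0 \<or> p r s = 1 \<or> \<mu> r s = 0" and "real (nat \<lfloor>M r s\<rfloor>) = M r s"
    and "nat \<lfloor>M r s\<rfloor> \<le> \<mu> r s"
proof -
  have cases: "w r s = 0 \<or> p r s = 0 \<or> p r s = 1"
    using assms w p unfolding free_entries_def by force
  then show "p r s = 0 \<or> p r s = 1 \<or> \<mu> r s = 0" using real_\<mu>[OF assms(1,2)] by auto
  have "M r s = 0 \<or> M r s = real (\<mu> r s)" using cases M_eq[OF assms(1,2)] real_\<mu>[OF assms(1,2)] by auto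
  then show "real (nat \<lfloor>M r s\<rfloor>) = M r s" "nat \<lfloor>M r s\<rfloor> \<le> \<mu> r s" by auto
qed

text \<open>The off-forest entries of the arrays we sum over: \<open>0\<close> on the forest (to be overwritten by
  \<open>extension\<close>), a \<open>\<surd>\<mu>\<close>-window around the mean on free entries, and the integral mean elsewhere.\<close>

definition window :: "nat \<Rightarrow> nat \<Rightarrow> nat set" where
  "window r s = (if (r, s) \<in> T then {0}
      else if (r, s) \<in> free_entries d w p
        then {j. j \<le> \<mu> r s \<and> \<bar>real j - real (\<mu> r s) * p r s\<bar> < sqrt (real (\<mu> r s))}
      else {nat \<lfloor>M r s\<rfloor>})"

definition tree_fill :: "(nat \<Rightarrow> nat \<Rightarrow> nat) \<Rightarrow> nat \<Rightarrow> nat \<Rightarrow> real" where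
  "tree_fill h = fill_tree d (\<lambda>r s. if (r, s) \<in> T then M r s else real (h r s)) L"

definition extension :: "(nat \<Rightarrow> nat \<Rightarrow> nat) \<Rightarrow> nat \<Rightarrow> nat \<Rightarrow> nat" where
  "extension h r s = nat \<lfloor>tree_fill h r s\<rfloor>"

lemma window_mem: "h \<in> entry_box d window \<Longrightarrow> r < d \<Longrightarrow> s < d \<Longrightarrow> h r s \<in> window r s"
  unfolding entry_box_def by auto

lemma tree_fill_off_tree: "(r, s) \<notin> T \<Longrightarrow> tree_fill h r s = real (h r s)"
  using fill_tree_other[of r s L d] unfolding tree_fill_def by (simp add: T_def)

lemma tree_fill_near_M:
  assumes h: "h \<in> entry_box d window" and rs: "r < d" "s < d"
  shows "\<bar>tree_fill h r s - M r s\<bar> \<le> B * sqrt n"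
proof -
  have "\<bar>(if (r', s') \<in> T then M r' s' else real (h r' s')) - M r' s'\<bar> \<le> sqrt n"
    if rs': "r' < d" "s' < d" for r' s'
  proof (cases "(r', s') \<in> T")
    case False
    show ?thesis
    proof (cases "(r', s') \<in> free_entries d w p")
      case True
      then have "\<bar>real (h r' s') - M r' s'\<bar> < sqrt (real (\<mu> r' s'))"
        using window_mem[OF h rs'] False M_eq[OF rs'] unfolding window_def by simp
      then have "\<bar>real (h r' s') - M r' s'\<bar> \<le> sqrt n" using sqrt_\<mu>_le[OF rs'] by linarith
      then show ?thesis using False by simp
    next
      case nonfree: False
      then show ?thesis
        using window_mem[OF h rs'] False nonfree_entry(2)[OF rs' nonfree] unfolding window_def by simp
    qed
  qed simp
  from abs_fill_tree_sub_le[OF E_off_diag L M_balanced this rs]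
  have "\<bar>tree_fill h r s - M r s\<bar> \<le> 4 ^ length L * real (d * d) * sqrt n"
    unfolding tree_fill_def .
  also have "\<dots> \<le> B * sqrt n" using B(1) by (intro mult_right_mono) auto
  finally show ?thesis .
qed

lemma real_extension:
  assumes h: "h \<in> entry_box d window"
  shows "real (extension h r s) = tree_fill h r s"
proof -
  have nonneg: "0 \<le> tree_fill h r s"
  proof (cases "(r, s) \<in> T")
    case True
    then have "r < d" "s < d" using T_less by auto
    then show ?thesis using tree_fill_near_M[OF h] tree_range[OF True] by force
  qed (simp add: tree_fill_off_tree)
  have "tree_fill h r s \<in> \<int>"
    unfolding tree_fill_def by (rule fill_tree_Ints[OF E_off_diag L]) (auto simp: T_def)
  then obtain k where "tree_fill h r s = of_int k" by (rule Ints_cases)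
  then show ?thesis using nonneg unfolding extension_def by simp
qed

lemma extension_off_tree:
  assumes "h \<in> entry_box d window" "(r, s) \<notin> T"
  shows "extension h r s = h r s"
  using real_extension[OF assms(1), of r s] tree_fill_off_tree[OF assms(2), of h] by simp

lemma extension_in_flow_arrays:
  assumes h: "h \<in> entry_box d window"
  shows "extension h \<in> flow_arrays d \<mu>"
proof -
  have le: "extension h r s \<le> \<mu> r s" if rs: "r < d" "s < d" for r s
  proof (cases "(r, s) \<in> T")
    case True
    then show ?thesis using tree_fill_near_M[OF h rs] tree_range real_extension[OF h, of r s] by force
  next
    case False
    then show ?thesis
      using extension_off_tree[OF h False] window_mem[OF h rs] nonfree_entry[OF rs]
      by (auto simp: window_def split: if_splits)
  qed
  have outside: "extension h r s = 0" if "\<not> (r < d \<and> s < d)" for r s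
  proof -
    have "(r, s) \<notin> T" using that T_less by blast
    then have "extension h r s = h r s" by (rule extension_off_tree[OF h])
    also have "h r s = 0" using h that unfolding entry_box_def by auto
    finally show ?thesis .
  qed
  have "net_flow d (tree_fill h) v = 0" if "v < d" for v
    unfolding tree_fill_def
  proof (rule net_flow_fill_tree_spanning[OF E_off_diag L cover M_balanced _ that])
    fix r s assume rs: "r < d" "s < d" "r \<noteq> s" "(r, s) \<notin> E"
    then have "(r, s) \<notin> free_entries d w p" "(r, s) \<notin> T"
      using T_def attach_seq_edges[OF L] unfolding E_def free_edges_def off_diag_def by auto
    then show "(if (r, s) \<in> T then M r s else real (h r s)) = M r s"
      using window_mem[OF h rs(1,2)] nonfree_entry[OF rs(1,2)] unfolding window_def by simp
  qed
  then have "in_F d (\<lambda>r s. real (extension h r s))"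
    unfolding in_F_iff_net_flow real_extension[OF h] by simp
  then show ?thesis unfolding flow_arrays_def using le outside by auto
qed

lemma inj_on_extension: "inj_on extension (entry_box d window)"
proof
  fix h h' assume h: "h \<in> entry_box d window" and h': "h' \<in> entry_box d window"
    and eq: "extension h = extension h'"
  show "h = h'"
  proof (intro ext)
    fix r s
    show "h r s = h' r s"
    proof (cases "(r, s) \<in> T")
      case True
      then have "r < d" "s < d" using T_less by auto
      then have "h r s \<in> window r s" "h' r s \<in> window r s" using window_mem h h' by auto
      then show ?thesis using True unfolding window_def by simp
    next
      case False
      then show ?thesis using extension_off_tree[OF h False] extension_off_tree[OF h' False] eq by metis
    qed
  qed
qed

definition entry_factor :: "nat \<Rightarrow> nat \<Rightarrow> real" where
  "entry_factor r s = exp (- real (\<mu> r s) * KL (p r s) \<alpha> - B * sqrt n * \<bar>tilt_slope \<alpha> (p r s)\<bar>)"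

definition tree_factor :: "nat \<Rightarrow> nat \<Rightarrow> real" where
  "tree_factor r s = (if (r, s) \<in> T then cl (r, s) / sqrt n else 1)"

definition window_weight :: "nat \<Rightarrow> nat \<Rightarrow> nat \<Rightarrow> real" where
  "window_weight r s j = (if (r, s) \<in> free_entries d w p - T then binom_prob (p r s) (\<mu> r s) j else 1)"

lemma window_weight_nonneg: "0 \<le> window_weight r s j"
  unfolding window_weight_def free_entries_def by (auto intro: binom_prob_nonneg)

lemma tree_factor_nonneg: "0 \<le> tree_factor r s"
  unfolding tree_factor_def using cl_nonneg by simp

lemma sum_window_weight:
  assumes rs: "r < d" "s < d"
  shows "1/3 \<le> (\<Sum>j\<in>window r s. window_weight r s j)"
proof (cases "(r, s) \<in> free_entries d w p - T")
  case True
  then have "0 < p r s" "p r s < 1" "0 < real (\<mu> r s)"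
    using real_\<mu>[OF rs] n(2) unfolding free_entries_def by auto
  then show ?thesis
    using True binom_prob_window_mass[of "p r s" "\<mu> r s"] unfolding window_def window_weight_def by simp
next
  case False
  then show ?thesis unfolding window_def window_weight_def by auto
qed

lemma extension_entry_lower:
  assumes h: "h \<in> entry_box d window" and rs: "r < d" "s < d"
  shows "entry_factor r s * (tree_factor r s * window_weight r s (h r s))
           \<le> binom_prob \<alpha> (\<mu> r s) (extension h r s)"
proof -
  define j where "j = extension h r s"
  have j_le: "j \<le> \<mu> r s" using extension_in_flow_arrays[OF h] rs unfolding j_def flow_arrays_def by auto
  show ?thesis
  proof (cases "(r, s) \<in> free_entries d w p")
    case free: True
    then have pr: "0 < p r s" "p r s < 1" unfolding free_entries_def by auto
    have near: "\<bar>real j - real (\<mu> r s) * p r s\<bar> \<le> B * sqrt n"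
    proof (cases "(r, s) \<in> T")
      case True
      then show ?thesis
        using tree_fill_near_M[OF h rs] real_extension[OF h] M_eq[OF rs] unfolding j_def by simp
    next
      case False
      then have "\<bar>real (h r s) - real (\<mu> r s) * p r s\<bar> < sqrt (real (\<mu> r s))"
        using window_mem[OF h rs] free unfolding window_def by simp
      then show ?thesis
        using extension_off_tree[OF h False] sqrt_\<mu>_le[OF rs] sqrt_n_le unfolding j_def by linarith
    qed
    have "tree_factor r s * window_weight r s (h r s) \<le> binom_prob (p r s) (\<mu> r s) j"
    proof (cases "(r, s) \<in> T")
      case True
      then show ?thesis using tree_lower[OF True j_le] near M_eq[OF rs]
        unfolding tree_factor_def window_weight_def by simp
    next
      case False
      then show ?thesis using extension_off_tree[OF h False] free
        unfolding tree_factor_def window_weight_def j_def by simp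
    qed
    then have "entry_factor r s * (tree_factor r s * window_weight r s (h r s))
        \<le> entry_factor r s * binom_prob (p r s) (\<mu> r s) j"
      unfolding entry_factor_def by simp
    also have "\<dots> \<le> binom_prob \<alpha> (\<mu> r s) j"
      unfolding entry_factor_def by (rule binom_prob_tilt_lower[OF \<alpha> pr j_le near])
    finally show ?thesis unfolding j_def .
  next
    case nonfree: False
    then have not_T: "(r, s) \<notin> T" using T_free by blast
    have "real j = real (\<mu> r s) * p r s"
      using window_mem[OF h rs] extension_off_tree[OF h not_T] not_T nonfree nonfree_entry(2)[OF rs nonfree]
        M_eq[OF rs] unfolding window_def j_def by simp
    then have "binom_prob \<alpha> (\<mu> r s) j = exp (- real (\<mu> r s) * KL (p r s) \<alpha>)"
      by (rule binom_prob_degenerate[OF \<alpha> nonfree_entry(1)[OF rs nonfree]])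
    moreover have "entry_factor r s \<le> exp (- real (\<mu> r s) * KL (p r s) \<alpha>)"
      unfolding entry_factor_def using B(2) by simp
    ultimately show ?thesis
      using not_T nonfree unfolding tree_factor_def window_weight_def j_def by simp
  qed
qed

lemma q_lower_fixed_n:
  "exp (- real n * (\<Sum>r<d. \<Sum>s<d. w r s * KL (p r s) \<alpha>) - sqrt n * B * (\<Sum>r<d. \<Sum>s<d. \<bar>tilt_slope \<alpha> (p r s)\<bar>))
     * (\<Prod>x\<in>T. cl x / sqrt n) * (1/3) ^ (d * d) \<le> q d \<alpha> \<mu>"
proof -
  define H where "H = entry_box d window"
  have finite_window: "finite (window r s)" for r s unfolding window_def by auto
  have entry_factors: "prod_entries d entry_factor
      = exp (- real n * (\<Sum>r<d. \<Sum>s<d. w r s * KL (p r s) \<alpha>) - sqrt n * B * (\<Sum>r<d. \<Sum>s<d. \<bar>tilt_slope \<alpha> (p r s)\<bar>))"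
    unfolding entry_factor_def prod_entries_exp
    by (simp add: real_\<mu> sum_subtractf sum_distrib_left mult_ac)
  have tree_factors: "prod_entries d tree_factor = (\<Prod>x\<in>T. cl x / sqrt n)"
  proof -
    have "T \<subseteq> {..<d} \<times> {..<d}" using T_less by auto
    then show ?thesis
      unfolding tree_factor_def using prod_entries_indicator[of T d "\<lambda>r s. cl (r, s) / sqrt n"] by simp
  qed
  have "prod_entries d entry_factor * prod_entries d tree_factor * prod_entries d (\<lambda>r s. 1/3)
      \<le> prod_entries d entry_factor * prod_entries d tree_factor
          * prod_entries d (\<lambda>r s. \<Sum>j\<in>window r s. window_weight r s j)"
  proof (rule mult_left_mono)
    show "prod_entries d (\<lambda>r s. 1/3) \<le> prod_entries d (\<lambda>r s. \<Sum>j\<in>window r s. window_weight r s j)"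
      by (rule prod_entries_mono) (simp, rule sum_window_weight)
  qed (auto intro!: mult_nonneg_nonneg prod_entries_nonneg simp: tree_factor_nonneg entry_factor_def)
  also have "\<dots> = (\<Sum>h\<in>H. prod_entries d (\<lambda>r s. entry_factor r s * (tree_factor r s * window_weight r s (h r s))))"
    unfolding H_def sum_entry_box[OF finite_window, symmetric] sum_distrib_left prod_entries_mult
    by (simp add: mult.assoc)
  also have "\<dots> \<le> (\<Sum>h\<in>H. prod_entries d (\<lambda>r s. binom_prob \<alpha> (\<mu> r s) (extension h r s)))"
    unfolding H_def using window_weight_nonneg tree_factor_nonneg
    by (intro sum_mono prod_entries_mono extension_entry_lower) (auto simp: entry_factor_def)
  also have "\<dots> = (\<Sum>\<nu>\<in>extension ` H. prod_entries d (\<lambda>r s. binom_prob \<alpha> (\<mu> r s) (\<nu> r s)))"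
    unfolding H_def by (rule sum.reindex[OF inj_on_extension, symmetric, unfolded comp_def])
  also have "\<dots> \<le> q d \<alpha> \<mu>"
    unfolding q_eq_sum_flow_arrays H_def using extension_in_flow_arrays \<alpha>
    by (intro sum_mono2[OF finite_flow_arrays]) (auto intro!: prod_entries_nonneg binom_prob_nonneg)
  finally show ?thesis unfolding entry_factors tree_factors prod_entries_const .
qed

end

lemma binom_prob_local_lower_scaled:
  assumes p: "0 < p" "p < 1" and w: "0 < w" and B: "0 \<le> B"
  shows "\<exists>c>0. \<exists>N. \<forall>n\<ge>N. \<forall>m. real m = real n * w \<longrightarrow>
           B * sqrt n \<le> real n * w * p \<and> real n * w * p + B * sqrt n \<le> real m \<and>
           (\<forall>j\<le>m. \<bar>real j - real n * w * p\<bar> \<le> B * sqrt n \<longrightarrow> c / sqrt n \<le> binom_prob p m j)"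
proof -
  obtain c m0 where c: "0 < c" and lower: "\<And>m j. m0 \<le> m \<Longrightarrow> j \<le> m
      \<Longrightarrow> \<bar>real j - real m * p\<bar> \<le> B / sqrt w * sqrt m \<Longrightarrow> c / sqrt m \<le> binom_prob p m j"
    using binom_prob_local_lower[OF p, of "B / sqrt w"] B w by auto
  define N where "N = nat \<lceil>real m0 / w\<rceil> + nat \<lceil>(B / (w * p))^2\<rceil> + nat \<lceil>(B / (w * (1 - p)))^2\<rceil>"
  show ?thesis
  proof (intro exI conjI allI impI)
    show "0 < c / sqrt w" using c w by simp
    fix n m assume n: "N \<le> n" and m: "real m = real n * w"
    have sqn: "sqrt n * sqrt n = real n" by simp
    have "nat \<lceil>(B / (w * p))^2\<rceil> \<le> n" using n unfolding N_def by linarith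
    then have "B / (w * p) \<le> sqrt n" using B w p by (intro le_sqrt_if_ceiling_sq_le) auto
    then have "B * sqrt n \<le> (sqrt n * (w * p)) * sqrt n"
      using w p by (intro mult_right_mono) (auto simp: field_simps)
    then show "B * sqrt n \<le> real n * w * p" using sqn by (simp add: mult_ac)
    have "nat \<lceil>(B / (w * (1 - p)))^2\<rceil> \<le> n" using n unfolding N_def by linarith
    then have "B / (w * (1 - p)) \<le> sqrt n" using B w p by (intro le_sqrt_if_ceiling_sq_le) auto
    then have "B * sqrt n \<le> (sqrt n * (w * (1 - p))) * sqrt n"
      using w p by (intro mult_right_mono) (auto simp: field_simps)
    then show "real n * w * p + B * sqrt n \<le> real m" using sqn m by (simp add: algebra_simps)
    fix j assume j: "j \<le> m" "\<bar>real j - real n * w * p\<bar> \<le> B * sqrt n"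
    have "real m0 / w \<le> real n" using n unfolding N_def by linarith
    then have "m0 \<le> m" using m w by (simp add: field_simps)
    moreover have sqm: "sqrt m = sqrt w * sqrt n" using m by (simp add: real_sqrt_mult)
    moreover have "\<bar>real j - real m * p\<bar> \<le> B / sqrt w * sqrt m"
      using j(2) m w sqm by (simp add: mult_ac)
    ultimately have "c / sqrt m \<le> binom_prob p m j" using lower j(1) by blast
    then show "c / sqrt w / sqrt n \<le> binom_prob p m j" using sqm by (simp add: divide_divide_eq_left)
  qed
qed

theorem q_lower_bound:
  fixes d :: nat and \<alpha> :: real and w p :: "nat \<Rightarrow> nat \<Rightarrow> real"
    and L :: "(nat \<times> (nat \<times> nat)) list"
  assumes \<alpha>: "0 < \<alpha>" "\<alpha> < 1"
    and w: "\<forall>r<d. \<forall>s<d. 0 \<le> w r s \<and> w r s \<le> 1"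
    and p: "\<forall>r<d. \<forall>s<d. 0 \<le> p r s \<and> p r s \<le> 1"
    and mean: "in_F d (\<lambda>r s. w r s * p r s)"
    and L: "attach_seq (class_roots d (free_edges d w p)) (free_edges d w p) L"
    and cover: "class_roots d (free_edges d w p) \<union> fst ` set L = {..<d}"
  shows "\<exists>c>0. \<exists>B N. \<forall>n\<ge>N. n \<in> admissible d w \<longrightarrow>
     c / sqrt n ^ length L * exp (- real n * (\<Sum>r<d. \<Sum>s<d. w r s * KL (p r s) \<alpha>) - sqrt n * B * (\<Sum>r<d. \<Sum>s<d. \<bar>tilt_slope \<alpha> (p r s)\<bar>))
       \<le> q d \<alpha> (scale_int n w)"
proof -
  define T where "T = snd ` set L"
  define B :: real where "B = 4 ^ length L * real (d * d) + 1"
  define edge_ok where "edge_ok r s c N \<longleftrightarrow> (\<forall>n\<ge>N. \<forall>m. real m = real n * w r s \<longrightarrow>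
      B * sqrt n \<le> real n * w r s * p r s \<and> real n * w r s * p r s + B * sqrt n \<le> real m \<and>
      (\<forall>j\<le>m. \<bar>real j - real n * w r s * p r s\<bar> \<le> B * sqrt n \<longrightarrow> c / sqrt n \<le> binom_prob (p r s) m j))"
    for r s c N
  have T_free: "(r, s) \<in> free_entries d w p" if "(r, s) \<in> T" for r s
    using attach_seq_edges[OF L] that unfolding T_def free_edges_def by auto
  have "\<forall>x\<in>T. \<exists>cN. 0 < fst cN \<and> edge_ok (fst x) (snd x) (fst cN) (snd cN)"
  proof
    fix x assume "x \<in> T"
    then show "\<exists>cN. 0 < fst cN \<and> edge_ok (fst x) (snd x) (fst cN) (snd cN)"
      using T_free[of "fst x" "snd x"] binom_prob_local_lower_scaled[of "p (fst x) (snd x)" "w (fst x) (snd x)" B]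
      unfolding edge_ok_def free_entries_def B_def by auto
  qed
  then obtain cN where cN: "\<And>x. x \<in> T \<Longrightarrow> 0 < fst (cN x) \<and> edge_ok (fst x) (snd x) (fst (cN x)) (snd (cN x))"
    by metis
  define N where "N = Max (insert 1 (snd ` cN ` T))"
  have finite_T: "finite T" unfolding T_def by simp
  have "free_edges d w p \<subseteq> off_diag d" unfolding free_edges_def by auto
  then have card_T: "card T = length L"
    unfolding T_def using distinct_card[OF attach_seq_distinct_edges[OF _ L]] by simp
  define c where "c = (\<Prod>x\<in>T. fst (cN x)) * (1/3) ^ (d * d)"
  have "0 < c" unfolding c_def using cN by (simp add: prod_pos)
  show ?thesis
  proof (rule exI[of _ c], rule conjI[OF \<open>0 < c\<close>], rule exI[of _ B], rule exI[of _ N], intro allI impI)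
    fix n assume n: "N \<le> n" "n \<in> admissible d w"
    have n_pos: "0 < n"
      using n(1) Max_ge[of "insert 1 (snd ` cN ` T)" 1] finite_T unfolding N_def by auto
    have N_le: "snd (cN x) \<le> n" if "x \<in> T" for x
      using n(1) Max_ge[of "insert 1 (snd ` cN ` T)" "snd (cN x)"] finite_T that unfolding N_def by auto
    have edge: "B * sqrt n \<le> real n * w r s * p r s \<and> real n * w r s * p r s + B * sqrt n \<le> real (scale_int n w r s) \<and>
        (\<forall>j\<le>scale_int n w r s. \<bar>real j - real n * w r s * p r s\<bar> \<le> B * sqrt n
           \<longrightarrow> fst (cN (r, s)) / sqrt n \<le> binom_prob (p r s) (scale_int n w r s) j)" if "(r, s) \<in> T" for r s
      using cN[OF that] N_le[OF that] T_free[OF that] real_scale_int[OF n(2), of r s]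
      unfolding edge_ok_def free_entries_def by auto
    interpret tilted_window_setting d \<alpha> w p n B L "\<lambda>x. fst (cN x)" "scale_int n w"
        "\<lambda>r s. real n * w r s * p r s" "free_edges d w p" T
      using \<alpha> w p mean n n_pos L cover edge cN
      by unfold_locales (auto simp: T_def B_def less_imp_le)
    have prod_eq: "(\<Prod>x\<in>T. fst (cN x) / sqrt n) = (\<Prod>x\<in>T. fst (cN x)) / sqrt n ^ length L"
      using card_T by (simp add: prod_dividef)
    have reorder: "P * t / D * x = x * (P / D) * t" for P t D x :: real
      by (simp add: divide_inverse mult_ac)
    show "c / sqrt n ^ length L
        * exp (- real n * (\<Sum>r<d. \<Sum>s<d. w r s * KL (p r s) \<alpha>) - sqrt n * B * (\<Sum>r<d. \<Sum>s<d. \<bar>tilt_slope \<alpha> (p r s)\<bar>))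
        \<le> q d \<alpha> (scale_int n w)"
      using q_lower_fixed_n unfolding c_def reorder prod_eq .
  qed
qed

section \<open>The exponential upper bound\<close>

lemma vartheta_le:
  assumes a: "0 < a" "a < 1" and w: "\<forall>r<d. \<forall>s<d. 0 \<le> w r s \<and> w r s \<le> 1"
    and x: "\<forall>r<d. \<forall>s<d. 0 \<le> x r s \<and> x r s \<le> 1" and F: "in_F d (\<lambda>r s. w r s * x r s)"
  shows "vartheta d a w \<le> (\<Sum>(r,s)\<in>graph_edges d w. w r s * KL (x r s) a)"
proof -
  define V where "V = {(\<Sum>(r,s) \<in> {(r,s). r < d \<and> s < d \<and> r \<noteq> s \<and> w r s > 0}. w r s * KL (x r s) a)
       | x. (\<forall>r<d. \<forall>s<d. 0 \<le> x r s \<and> x r s \<le> 1) \<and> in_F d (\<lambda>r s. w r s * x r s)}"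
  have mem: "(\<Sum>(r,s)\<in>graph_edges d w. w r s * KL (x r s) a) \<in> V"
    unfolding V_def graph_edges_def using x F by blast
  have bdd: "bdd_below V"
  proof (rule bdd_belowI[of _ 0])
    fix v assume "v \<in> V"
    then obtain y where y: "v = (\<Sum>(r,s) \<in> {(r,s). r < d \<and> s < d \<and> r \<noteq> s \<and> w r s > 0}. w r s * KL (y r s) a)"
      "\<forall>r<d. \<forall>s<d. 0 \<le> y r s \<and> y r s \<le> 1" unfolding V_def by blast
    show "0 \<le> v" unfolding y(1)
      by (rule sum_nonneg) (use y(2) w KL_nonneg[OF _ _ a] in \<open>auto intro!: mult_nonneg_nonneg\<close>)
  qed
  show ?thesis unfolding vartheta_def V_def[symmetric] by (rule cInf_lower[OF mem bdd])
qed

lemma flow_frequencies_feasible: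
  fixes \<nu> :: "nat \<Rightarrow> nat \<Rightarrow> nat"
  assumes w: "\<forall>r<d. \<forall>s<d. 0 \<le> w r s \<and> w r s \<le> 1"
    and n: "n \<in> admissible d w" "0 < n" and \<nu>: "\<nu> \<in> flow_arrays d (scale_int n w)"
  defines "x \<equiv> \<lambda>r s. if 0 < w r s then real (\<nu> r s) / real (scale_int n w r s) else 0"
  shows "\<forall>r<d. \<forall>s<d. 0 \<le> x r s \<and> x r s \<le> 1" and "in_F d (\<lambda>r s. w r s * x r s)"
proof -
  have \<mu>: "real (scale_int n w r s) = real n * w r s" if "r < d" "s < d" for r s
    using real_scale_int[OF n(1) that] w that by auto
  have le: "\<nu> r s \<le> scale_int n w r s" if "r < d" "s < d" for r s
    using \<nu> that unfolding flow_arrays_def by auto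
  show "\<forall>r<d. \<forall>s<d. 0 \<le> x r s \<and> x r s \<le> 1"
  proof (intro allI impI)
    fix r s assume rs: "r < d" "s < d"
    show "0 \<le> x r s \<and> x r s \<le> 1"
    proof (cases "0 < w r s")
      case True
      then have "0 < real (scale_int n w r s)" using \<mu>[OF rs] n(2) by simp
      then show ?thesis unfolding x_def using True le[OF rs] by (simp add: field_simps)
    qed (simp add: x_def)
  qed
  have wx: "w r s * x r s = 1 / real n * real (\<nu> r s)" if rs: "r < d" "s < d" for r s
  proof (cases "0 < w r s")
    case True
    then show ?thesis unfolding x_def using \<mu>[OF rs] n(2) by (simp add: field_simps)
  next
    case False
    then have "w r s = 0" using w rs by force
    then have "\<nu> r s = 0" using le[OF rs] \<mu>[OF rs] by simp
    then show ?thesis unfolding x_def using False by simp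
  qed
  have "net_flow d (\<lambda>r s. w r s * x r s) v = 0" if v: "v < d" for v
  proof -
    have "net_flow d (\<lambda>r s. w r s * x r s) v = net_flow d (\<lambda>r s. 1 / real n * real (\<nu> r s)) v"
      by (rule net_flow_cong) (use wx v in auto)
    also have "\<dots> = 1 / real n * net_flow d (\<lambda>r s. real (\<nu> r s)) v" by (rule net_flow_scale)
    also have "net_flow d (\<lambda>r s. real (\<nu> r s)) v = 0"
      using \<nu> v unfolding flow_arrays_def in_F_iff_net_flow by auto
    finally show ?thesis by simp
  qed
  then show "in_F d (\<lambda>r s. w r s * x r s)" unfolding in_F_iff_net_flow by simp
qed

lemma prod_binom_prob_le_exp_vartheta:
  assumes \<alpha>: "0 < \<alpha>" "\<alpha> < 1" and w: "\<forall>r<d. \<forall>s<d. 0 \<le> w r s \<and> w r s \<le> 1"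
    and n: "n \<in> admissible d w" "0 < n" and \<nu>: "\<nu> \<in> flow_arrays d (scale_int n w)"
  shows "prod_entries d (\<lambda>r s. binom_prob \<alpha> (scale_int n w r s) (\<nu> r s)) \<le> exp (- real n * vartheta d \<alpha> w)"
proof -
  define \<mu> where "\<mu> = scale_int n w"
  define x where "x = (\<lambda>r s. if 0 < w r s then real (\<nu> r s) / real (\<mu> r s) else 0)"
  define S where "S = graph_edges d w"
  have S: "S \<subseteq> {..<d} \<times> {..<d}" unfolding S_def graph_edges_def by auto
  have vartheta: "vartheta d \<alpha> w \<le> (\<Sum>(r,s)\<in>S. w r s * KL (x r s) \<alpha>)"
    unfolding S_def x_def \<mu>_def
    by (rule vartheta_le[OF \<alpha> w flow_frequencies_feasible[OF w n \<nu>]])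
  have entry: "binom_prob \<alpha> (\<mu> r s) (\<nu> r s) \<le> (if (r, s) \<in> S then exp (- real n * (w r s * KL (x r s) \<alpha>)) else 1)"
    if rs: "r < d" "s < d" for r s
  proof (cases "(r, s) \<in> S")
    case True
    then have "0 < w r s" unfolding S_def graph_edges_def by auto
    moreover have "\<nu> r s \<le> \<mu> r s" using \<nu> rs unfolding flow_arrays_def \<mu>_def by auto
    ultimately show ?thesis
      using True binom_prob_chernoff[OF \<alpha>, of "\<nu> r s" "\<mu> r s"] real_scale_int[OF n(1) rs] w rs
      unfolding x_def \<mu>_def by (simp add: mult.assoc)
  qed (use binom_prob_le_1 \<alpha> in simp)
  have "prod_entries d (\<lambda>r s. binom_prob \<alpha> (\<mu> r s) (\<nu> r s))
      \<le> prod_entries d (\<lambda>r s. if (r, s) \<in> S then exp (- real n * (w r s * KL (x r s) \<alpha>)) else 1)"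
    by (rule prod_entries_mono) (use entry \<alpha> in \<open>auto intro: binom_prob_nonneg\<close>)
  also have "\<dots> = (\<Prod>y\<in>S. exp (- real n * (w (fst y) (snd y) * KL (x (fst y) (snd y)) \<alpha>)))"
    by (rule prod_entries_indicator[OF S])
  also have "\<dots> = exp (- real n * (\<Sum>(r,s)\<in>S. w r s * KL (x r s) \<alpha>))"
    using finite_subset[OF S] by (simp add: exp_sum sum_distrib_left case_prod_beta')
  also have "\<dots> \<le> exp (- real n * vartheta d \<alpha> w)"
    using mult_left_mono[OF vartheta, of "real n"] by simp
  finally show ?thesis unfolding \<mu>_def .
qed

lemma card_flow_arrays_le:
  assumes w: "\<forall>r<d. \<forall>s<d. 0 \<le> w r s \<and> w r s \<le> 1" and n: "n \<in> admissible d w"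
  shows "real (card (flow_arrays d (scale_int n w))) \<le> (real n + 1) ^ (d * d)"
proof -
  define \<mu> where "\<mu> = scale_int n w"
  have "card (flow_arrays d \<mu>) \<le> card (entry_box d (\<lambda>r s. {..\<mu> r s}))"
    by (rule card_mono[OF finite_entry_box flow_arrays_subset_entry_box]) simp
  then have "real (card (flow_arrays d \<mu>)) \<le> prod_entries d (\<lambda>r s. real (card {..\<mu> r s}))"
    using card_entry_box[of d "\<lambda>r s. {..\<mu> r s}"] by simp
  also have "\<dots> \<le> prod_entries d (\<lambda>r s. real n + 1)"
  proof (rule prod_entries_mono)
    fix r s assume rs: "r < d" "s < d"
    have "real (\<mu> r s) \<le> real n"
      using real_scale_int[OF n rs] w rs unfolding \<mu>_def by (simp add: mult_left_le)
    then show "real (card {..\<mu> r s}) \<le> real n + 1" by simp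
  qed simp
  finally show ?thesis unfolding \<mu>_def prod_entries_const .
qed

theorem q_upper_exp:
  assumes \<alpha>: "0 < \<alpha>" "\<alpha> < 1" and w: "\<forall>r<d. \<forall>s<d. 0 \<le> w r s \<and> w r s \<le> 1"
    and n: "n \<in> admissible d w" "0 < n"
  shows "q d \<alpha> (scale_int n w) \<le> (real n + 1) ^ (d * d) * exp (- real n * vartheta d \<alpha> w)"
proof -
  have "q d \<alpha> (scale_int n w)
      = (\<Sum>\<nu>\<in>flow_arrays d (scale_int n w). prod_entries d (\<lambda>r s. binom_prob \<alpha> (scale_int n w r s) (\<nu> r s)))"
    by (rule q_eq_sum_flow_arrays)
  also have "\<dots> \<le> (\<Sum>\<nu>\<in>flow_arrays d (scale_int n w). exp (- real n * vartheta d \<alpha> w))"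
    by (rule sum_mono) (rule prod_binom_prob_le_exp_vartheta[OF \<alpha> w n])
  also have "\<dots> \<le> (real n + 1) ^ (d * d) * exp (- real n * vartheta d \<alpha> w)"
    using card_flow_arrays_le[OF w n(1)] by (simp add: mult_right_mono)
  finally show ?thesis .
qed

section \<open>The two rates\<close>

lemma eventually_admissible:
  assumes "eventually P sequentially"
  shows "eventually (\<lambda>n. n \<in> admissible d w \<and> P n) (inf sequentially (principal (admissible d w)))"
  using assms unfolding eventually_inf_principal by (auto elim: eventually_mono)

lemma ln_div_sqrt_power:
  assumes c: "0 < c" and n: "0 < n"
  shows "ln (c / sqrt (real n) ^ k) = ln c - real k / 2 * ln (real n)"
proof -
  have "ln (c / sqrt (real n) ^ k) = ln c - ln (sqrt (real n) ^ k)" using c n by (simp add: ln_div)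
  also have "ln (sqrt (real n) ^ k) = real k * ln (sqrt (real n))" using n by (simp add: ln_realpow)
  also have "ln (sqrt (real n)) = ln (real n) / 2" using n by (simp add: ln_sqrt)
  finally show ?thesis by simp
qed

lemma tendsto_ln_div_ln_sandwich:
  fixes f :: "nat \<Rightarrow> real"
  assumes F: "F \<le> sequentially" and c: "0 < c"
    and bounds: "eventually (\<lambda>n. c / sqrt n ^ k \<le> f n \<and> f n \<le> C / sqrt n ^ k) F"
  shows "((\<lambda>n. ln (f n) / ln (real n)) \<longlongrightarrow> - real k / 2) F"
proof (rule tendsto_sandwich)
  have ev: "eventually (\<lambda>n. 2 \<le> n \<and> c / sqrt n ^ k \<le> f n \<and> f n \<le> C / sqrt n ^ k) F"
    using bounds filter_leD[OF F eventually_ge_at_top[of 2]] by eventually_elim auto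
  have est: "- real k / 2 + ln c / ln n \<le> ln (f n) / ln n \<and> ln (f n) / ln n \<le> - real k / 2 + ln C / ln n"
    if n: "2 \<le> n" and lower: "c / sqrt n ^ k \<le> f n" and upper: "f n \<le> C / sqrt n ^ k" for n
  proof -
    have n0: "0 < n" and ln_n: "0 < ln (real n)" using n by auto
    have "0 < c / sqrt n ^ k" using c n0 by simp
    then have f0: "0 < f n" using lower by linarith
    then have "0 < C / sqrt n ^ k" using upper by linarith
    then have C0: "0 < C" using n0 by (simp add: zero_less_divide_iff)
    have "ln c - real k / 2 * ln n = ln (c / sqrt n ^ k)" by (rule ln_div_sqrt_power[OF c n0, symmetric])
    also have "\<dots> \<le> ln (f n)" using lower f0 c n0 by simp
    finally have "(ln c - real k / 2 * ln n) / ln n \<le> ln (f n) / ln n"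
      using ln_n by (simp add: divide_right_mono)
    moreover have "ln (f n) \<le> ln (C / sqrt n ^ k)" using upper f0 C0 n0 by simp
    then have "ln (f n) / ln n \<le> (ln C - real k / 2 * ln n) / ln n"
      unfolding ln_div_sqrt_power[OF C0 n0] using ln_n by (simp add: divide_right_mono)
    moreover have "(ln a - real k / 2 * ln n) / ln n = - real k / 2 + ln a / ln n" for a
      using ln_n by (simp add: field_simps)
    ultimately show ?thesis by simp
  qed
  show "eventually (\<lambda>n. - real k / 2 + ln c / ln n \<le> ln (f n) / ln n) F"
    "eventually (\<lambda>n. ln (f n) / ln n \<le> - real k / 2 + ln C / ln n) F"
    using ev by (eventually_elim, use est in blast)+
  have "((\<lambda>n::nat. - real k / 2 + ln c / ln (real n)) \<longlongrightarrow> - real k / 2) sequentially"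
    "((\<lambda>n::nat. - real k / 2 + ln C / ln (real n)) \<longlongrightarrow> - real k / 2) sequentially"
    by real_asymp+
  then show "((\<lambda>n. - real k / 2 + ln c / ln n) \<longlongrightarrow> - real k / 2) F"
    "((\<lambda>n. - real k / 2 + ln C / ln n) \<longlongrightarrow> - real k / 2) F"
    using tendsto_mono[OF F] by blast+
qed

lemma q_poly_bounds:
  assumes \<alpha>: "0 < \<alpha>" "\<alpha> < 1" and w: "\<forall>r<d. \<forall>s<d. 0 \<le> w r s \<and> w r s \<le> 1" and w_in_F: "in_F d w"
  shows "\<exists>c>0. \<exists>N C. \<forall>n\<ge>N. n \<in> admissible d w \<longrightarrow>
      c / sqrt n ^ (d - num_components d w) \<le> q d \<alpha> (scale_int n w)
      \<and> q d \<alpha> (scale_int n w) \<le> C / sqrt n ^ (d - num_components d w)"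
proof -
  define E where "E = graph_edges d w"
  have "E \<subseteq> {(a,b). a < d \<and> b < d \<and> a \<noteq> b}" unfolding E_def graph_edges_def by auto
  then obtain L where L: "attach_seq (class_roots d E) E L" "class_roots d E \<union> fst ` set L = {..<d}"
      "length L = d - card ({..<d} // conn_rel d E)"
    using ex_spanning_attach_seq by blast
  have k: "length L = d - num_components d w"
    unfolding L(3) num_components_def connected_rel_def conn_rel_def E_def ..
  have free: "free_edges d w (\<lambda>r s. \<alpha>) = E"
    unfolding free_edges_def free_entries_def E_def graph_edges_def off_diag_def using \<alpha> by auto
  have mean: "in_F d (\<lambda>r s. w r s * \<alpha>)"
    using w_in_F net_flow_scale[of d \<alpha> w] unfolding in_F_iff_net_flow by (simp add: mult.commute)
  obtain c B N1 where c: "0 < c" and lower: "\<forall>n\<ge>N1. n \<in> admissible d w \<longrightarrow>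
     c / sqrt n ^ length L * exp (- real n * (\<Sum>r<d. \<Sum>s<d. w r s * KL \<alpha> \<alpha>) - sqrt n * B * (\<Sum>r<d. \<Sum>s<d. \<bar>tilt_slope \<alpha> \<alpha>\<bar>))
       \<le> q d \<alpha> (scale_int n w)"
    using q_lower_bound[of \<alpha> d w "\<lambda>r s. \<alpha>", unfolded free, OF \<alpha> w _ mean L(1,2)] \<alpha> by auto
  obtain C N2 where upper: "\<forall>n\<ge>N2. n \<in> admissible d w \<longrightarrow> q d \<alpha> (scale_int n w) \<le> C / sqrt n ^ length L"
    using q_upper_poly[OF \<alpha> w L(1)[unfolded E_def]] by blast
  have "c / sqrt n ^ (d - num_components d w) \<le> q d \<alpha> (scale_int n w)
      \<and> q d \<alpha> (scale_int n w) \<le> C / sqrt n ^ (d - num_components d w)"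
    if "max N1 N2 \<le> n" "n \<in> admissible d w" for n
    using lower upper that unfolding k by (simp add: KL_self tilt_slope_self[OF \<alpha>])
  then show ?thesis using c by blast
qed

lemma q_polynomial_rate:
  assumes \<alpha>: "0 < \<alpha>" "\<alpha> < 1" and w: "\<forall>r<d. \<forall>s<d. 0 \<le> w r s \<and> w r s \<le> 1" and w_in_F: "in_F d w"
  shows "((\<lambda>n. ln (q d \<alpha> (scale_int n w)) / ln (real n))
            \<longlongrightarrow> - (real d - real (num_components d w)) / 2)
            (inf sequentially (principal (admissible d w)))"
proof -
  obtain c N C where c: "0 < c" and bounds: "\<forall>n\<ge>N. n \<in> admissible d w \<longrightarrow>
      c / sqrt n ^ (d - num_components d w) \<le> q d \<alpha> (scale_int n w)
      \<and> q d \<alpha> (scale_int n w) \<le> C / sqrt n ^ (d - num_components d w)"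
    using q_poly_bounds[OF \<alpha> w w_in_F] by blast
  have "num_components d w \<le> d"
    unfolding num_components_def connected_rel_def conn_rel_def[symmetric]
    by (rule card_conn_classes_le) (auto simp: graph_edges_def)
  then have k: "real (d - num_components d w) = real d - real (num_components d w)" by simp
  have "eventually (\<lambda>n. c / sqrt n ^ (d - num_components d w) \<le> q d \<alpha> (scale_int n w)
      \<and> q d \<alpha> (scale_int n w) \<le> C / sqrt n ^ (d - num_components d w))
      (inf sequentially (principal (admissible d w)))"
    using eventually_admissible[OF eventually_ge_at_top[of N]] by (rule eventually_mono) (use bounds in blast)
  from tendsto_ln_div_ln_sandwich[OF _ c this] show ?thesis unfolding k by simp
qed

lemma q_exp_upper_eventually:
  assumes \<alpha>: "0 < \<alpha>" "\<alpha> < 1" and w: "\<forall>r<d. \<forall>s<d. 0 \<le> w r s \<and> w r s \<le> 1" and e: "0 < e"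
  shows "eventually (\<lambda>n. ln (q d \<alpha> (scale_int n w)) / real n < - vartheta d \<alpha> w + e)
           (inf sequentially (principal (admissible d w)))"
proof -
  have "((\<lambda>n::nat. real (d * d) * ln (real n + 1) / real n) \<longlongrightarrow> 0) sequentially" by real_asymp
  from order_tendstoD(2)[OF this e]
  have "eventually (\<lambda>n. 0 < n \<and> real (d * d) * ln (real n + 1) / real n < e) sequentially"
    using eventually_gt_at_top[of "0::nat"] by eventually_elim auto
  then show ?thesis
  proof (rule eventually_mono[OF eventually_admissible], elim conjE)
    fix n assume n: "n \<in> admissible d w" "0 < n" and small: "real (d * d) * ln (real n + 1) / real n < e"
    have "ln (q d \<alpha> (scale_int n w)) \<le> ln ((real n + 1) ^ (d * d) * exp (- real n * vartheta d \<alpha> w))"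
      using q_upper_exp[OF \<alpha> w n] q_pos[OF \<alpha>] by simp
    also have "\<dots> = real (d * d) * ln (real n + 1) - real n * vartheta d \<alpha> w"
      by (simp add: ln_mult ln_realpow)
    finally have "ln (q d \<alpha> (scale_int n w)) / real n
        \<le> (real (d * d) * ln (real n + 1) - real n * vartheta d \<alpha> w) / real n"
      using n by (simp add: divide_right_mono)
    also have "\<dots> = real (d * d) * ln (real n + 1) / real n - vartheta d \<alpha> w" using n by (simp add: field_simps)
    finally show "ln (q d \<alpha> (scale_int n w)) / real n < - vartheta d \<alpha> w + e" using small by simp
  qed
qed

lemma sum_KL_diag_alpha:
  assumes w: "\<forall>r<d. \<forall>s<d. 0 \<le> w r s \<and> w r s \<le> 1"
  shows "(\<Sum>r<d. \<Sum>s<d. w r s * KL (if r = s then \<alpha> else x r s) \<alpha>)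
           = (\<Sum>(r,s)\<in>graph_edges d w. w r s * KL (x r s) \<alpha>)"
proof -
  have "(\<Sum>r<d. \<Sum>s<d. w r s * KL (if r = s then \<alpha> else x r s) \<alpha>)
      = (\<Sum>(r,s)\<in>{..<d} \<times> {..<d}. w r s * KL (if r = s then \<alpha> else x r s) \<alpha>)"
    by (simp add: sum.cartesian_product)
  also have "\<dots> = (\<Sum>(r,s)\<in>graph_edges d w. w r s * KL (if r = s then \<alpha> else x r s) \<alpha>)"
    by (rule sum.mono_neutral_right) (use w in \<open>auto simp: graph_edges_def KL_self less_le\<close>)
  also have "\<dots> = (\<Sum>(r,s)\<in>graph_edges d w. w r s * KL (x r s) \<alpha>)"
    by (rule sum.cong) (auto simp: graph_edges_def)
  finally show ?thesis .
qed

lemma q_exp_lower_eventually: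
  assumes \<alpha>: "0 < \<alpha>" "\<alpha> < 1" and w: "\<forall>r<d. \<forall>s<d. 0 \<le> w r s \<and> w r s \<le> 1"
    and x: "\<forall>r<d. \<forall>s<d. 0 \<le> x r s \<and> x r s \<le> 1" and x_in_F: "in_F d (\<lambda>r s. w r s * x r s)"
    and e: "0 < e"
  shows "eventually (\<lambda>n. - (\<Sum>(r,s)\<in>graph_edges d w. w r s * KL (x r s) \<alpha>) - e < ln (q d \<alpha> (scale_int n w)) / real n)
           (inf sequentially (principal (admissible d w)))"
proof -
  define v where "v = (\<Sum>(r,s)\<in>graph_edges d w. w r s * KL (x r s) \<alpha>)"
  define p where "p = (\<lambda>r s. if r = s then \<alpha> else x r s)"
  have p: "\<forall>r<d. \<forall>s<d. 0 \<le> p r s \<and> p r s \<le> 1" unfolding p_def using x \<alpha> by auto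
  have mean: "in_F d (\<lambda>r s. w r s * p r s)"
    using x_in_F net_flow_diag_cong[of "\<lambda>r s. w r s * p r s" "\<lambda>r s. w r s * x r s"]
    unfolding in_F_iff_net_flow p_def by simp
  have "free_edges d w p \<subseteq> {(a,b). a < d \<and> b < d \<and> a \<noteq> b}" unfolding free_edges_def off_diag_def by auto
  then obtain L where L: "attach_seq (class_roots d (free_edges d w p)) (free_edges d w p) L"
      "class_roots d (free_edges d w p) \<union> fst ` set L = {..<d}"
    using ex_spanning_attach_seq by blast
  define \<Lambda> where "\<Lambda> = (\<Sum>r<d. \<Sum>s<d. \<bar>tilt_slope \<alpha> (p r s)\<bar>)"
  define k where "k = length L"
  have sum_KL: "(\<Sum>r<d. \<Sum>s<d. w r s * KL (p r s) \<alpha>) = v"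
    unfolding p_def v_def by (rule sum_KL_diag_alpha[OF w])
  obtain c B N where c: "0 < c" and lower': "\<forall>n\<ge>N. n \<in> admissible d w \<longrightarrow>
      c / sqrt n ^ length L * exp (- real n * (\<Sum>r<d. \<Sum>s<d. w r s * KL (p r s) \<alpha>) - sqrt n * B * \<Lambda>)
        \<le> q d \<alpha> (scale_int n w)"
    using q_lower_bound[OF \<alpha> w p mean L] unfolding \<Lambda>_def by blast
  have lower: "c / sqrt n ^ k * exp (- real n * v - sqrt n * B * \<Lambda>) \<le> q d \<alpha> (scale_int n w)"
    if "N \<le> n" "n \<in> admissible d w" for n
    using lower' that unfolding sum_KL k_def by blast
  have "((\<lambda>n::nat. ln c / real n - real k * ln (real n) / (2 * real n) - B * \<Lambda> / sqrt (real n)) \<longlongrightarrow> 0) sequentially"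
    by real_asymp
  then have "eventually (\<lambda>n. - e < ln c / real n - real k * ln (real n) / (2 * real n) - B * \<Lambda> / sqrt (real n))
      sequentially" by (rule order_tendstoD(1)) (use e in simp)
  then have "eventually (\<lambda>n. N \<le> n \<and> 0 < n \<and>
      - e < ln c / real n - real k * ln (real n) / (2 * real n) - B * \<Lambda> / sqrt (real n)) sequentially"
    using eventually_ge_at_top[of N] eventually_gt_at_top[of "0::nat"] by eventually_elim auto
  then show ?thesis unfolding v_def[symmetric]
  proof (rule eventually_mono[OF eventually_admissible], elim conjE)
    fix n assume n: "n \<in> admissible d w" "N \<le> n" "0 < n"
      and small: "- e < ln c / real n - real k * ln (real n) / (2 * real n) - B * \<Lambda> / sqrt (real n)"
    have "ln c - real k / 2 * ln (real n) + (- real n * v - sqrt n * B * \<Lambda>)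
        = ln (c / sqrt n ^ k * exp (- real n * v - sqrt n * B * \<Lambda>))"
      using c n by (simp add: ln_mult ln_div_sqrt_power)
    also have "\<dots> \<le> ln (q d \<alpha> (scale_int n w))" using lower[OF n(2,1)] c n q_pos[OF \<alpha>] by simp
    finally have "(ln c - real k / 2 * ln (real n) - real n * v - sqrt n * B * \<Lambda>) / real n
        \<le> ln (q d \<alpha> (scale_int n w)) / real n"
      using n by (simp add: divide_right_mono)
    moreover have "(ln c - real k / 2 * ln (real n) - real n * v - sqrt n * B * \<Lambda>) / real n
        = ln c / real n - real k * ln (real n) / (2 * real n) - B * \<Lambda> / sqrt (real n) - v"
    proof -
      have "sqrt n * B * \<Lambda> / real n = B * \<Lambda> / sqrt n"
        using n by (simp add: field_simps real_sqrt_mult[symmetric])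
      then show ?thesis using n by (simp add: diff_divide_distrib)
    qed
    ultimately show "- v - e < ln (q d \<alpha> (scale_int n w)) / real n" using small by linarith
  qed
qed

lemma vartheta_approx:
  fixes e :: real and d :: nat and w :: "nat \<Rightarrow> nat \<Rightarrow> real" and \<alpha> :: real
  assumes e: "0 < e"
  obtains x where "\<forall>r<d. \<forall>s<d. 0 \<le> x r s \<and> x r s \<le> 1" "in_F d (\<lambda>r s. w r s * x r s)"
    "(\<Sum>(r,s)\<in>graph_edges d w. w r s * KL (x r s) \<alpha>) < vartheta d \<alpha> w + e"
proof -
  define V where "V = {(\<Sum>(r,s) \<in> {(r,s). r < d \<and> s < d \<and> r \<noteq> s \<and> w r s > 0}. w r s * KL (x r s) \<alpha>)
       | x. (\<forall>r<d. \<forall>s<d. 0 \<le> x r s \<and> x r s \<le> 1) \<and> in_F d (\<lambda>r s. w r s * x r s)}"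
  have "V \<noteq> {}" unfolding V_def by (auto simp: in_F_def intro!: exI[of _ "\<lambda>r s. 0"])
  moreover have "Inf V < vartheta d \<alpha> w + e" unfolding vartheta_def V_def[symmetric] using e by simp
  ultimately obtain v where "v \<in> V" "v < vartheta d \<alpha> w + e" using cInf_lessD by blast
  then show ?thesis using that unfolding V_def graph_edges_def by blast
qed

lemma q_exponential_rate:
  assumes \<alpha>: "0 < \<alpha>" "\<alpha> < 1" and w: "\<forall>r<d. \<forall>s<d. 0 \<le> w r s \<and> w r s \<le> 1"
  shows "((\<lambda>n. ln (q d \<alpha> (scale_int n w)) / real n) \<longlongrightarrow> - vartheta d \<alpha> w)
            (inf sequentially (principal (admissible d w)))"
proof (rule tendstoI)
  fix e :: real assume e: "0 < e"
  then have e2: "0 < e / 2" by simp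
  obtain x where x: "\<forall>r<d. \<forall>s<d. 0 \<le> x r s \<and> x r s \<le> 1" "in_F d (\<lambda>r s. w r s * x r s)"
    and x_opt: "(\<Sum>(r,s)\<in>graph_edges d w. w r s * KL (x r s) \<alpha>) < vartheta d \<alpha> w + e / 2"
    by (rule vartheta_approx[OF e2])
  show "eventually (\<lambda>n. dist (ln (q d \<alpha> (scale_int n w)) / real n) (- vartheta d \<alpha> w) < e)
          (inf sequentially (principal (admissible d w)))"
    using q_exp_upper_eventually[OF \<alpha> w e] q_exp_lower_eventually[OF \<alpha> w x e2]
    by eventually_elim (use x_opt in \<open>simp add: dist_real_def abs_less_iff\<close>)
qed

theorem mainTheorem7:
  fixes d :: nat and \<alpha> :: real and w :: "nat \<Rightarrow> nat \<Rightarrow> real"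
  assumes "d \<ge> 2" and "0 < \<alpha>" and "\<alpha> < 1"
    and "\<forall>r<d. \<forall>s<d. 0 \<le> w r s \<and> w r s \<le> 1"
  shows "(in_F d w \<longrightarrow>
            ((\<lambda>n. ln (q d \<alpha> (scale_int n w)) / ln (real n))
               \<longlongrightarrow> - (real d - real (num_components d w)) / 2)
            (inf sequentially (principal (admissible d w))))
       \<and> (\<not> in_F d w \<longrightarrow>
            ((\<lambda>n. ln (q d \<alpha> (scale_int n w)) / real n)
               \<longlongrightarrow> - vartheta d \<alpha> w)
            (inf sequentially (principal (admissible d w))))"
  using q_polynomial_rate[OF assms(2,3,4)] q_exponential_rate[OF assms(2,3,4)] by blast

end
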